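(* Let $\lambda\in\mathbb C$ be such that the generalized Verma module $M^+_\lambda$ is irreducible, with generating vector $v_\lambda$. Let $\mathcal V$ be a $U\mathfrak g$-module and $w\in\mathcal V$. Then there is at most one element $z\in M^+_\lambda\check\otimes\mathcal V$ which is $U\mathfrak g$-invariant (i.e. $x\cdot z=0$ for all $x\in\mathfrak g$, with $\mathfrak g$ acting via the coproduct) and satisfies $z\in v_\lambda\otimes w+(U\mathfrak n_-)_{<0}\cdot v_\lambda\check\otimes\mathcal V$.
   Context: $\mathfrak g=\bigoplus_{i\in\mathbb Z}\mathfrak g_i$ is a $\mathbb Z$-graded complex Lie algebra with finite-dimensional components; $\mathfrak n_+=\bigoplus_{i>0}\mathfrak g_i$, $\mathfrak n_-=\bigoplus_{i<0}\mathfrak g_i$, $\mathfrak p_+=\mathfrak g_0\oplus\mathfrak n_+$. $\chi:\mathfrak g_0\to\mathbb C$ is a nonsingular character (Lie algebra homomorphism such that $(u,v)\mapsto\chi([u,v]_0)$ is a nondegenerate pairing $\mathfrak n_+\times\mathfrak n_-\to\mathbb C$, $x_0$ being the $\mathfrak g_0$-component). For $\lambda\in\mathbb C$, $\chi_\lambda=\lambda\chi$ is made a $\mathfrak p_+$-module by letting $\mathfrak n_+$ act by zero, and $M^+_\lambda=U\mathfrak g\otimes_{U\mathfrak p_+}\chi_\lambda$ is the generalized Verma module with generating vector $v_\lambda=1\otimes1$; $M^+_\lambda$ is a free $U\mathfrak n_-$-module on $v_\lambda$ and is graded by $(M^+_\lambda)_{-n}=(U\mathfrak n_-)_{-n}v_\lambda$.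 For a $\mathbb Z$-graded $U\mathfrak g$-module $M$ and any $U\mathfrak g$-module $V$, the completed tensor product is $M\check\otimes V=\prod_i M_i\otimes V$ (formal infinite sums of homogeneous components), with $U\mathfrak g$ acting via the coproduct $\Delta(x)=x\otimes1+1\otimes x$, $x\in\mathfrak g$. *)

theory Defs
  imports Complex_Main
begin

definition lie_algebra :: "(complex \<Rightarrow> 'g \<Rightarrow> 'g) \<Rightarrow> ('g \<Rightarrow> 'g \<Rightarrow> 'g::ab_group_add) \<Rightarrow> bool" where
  "lie_algebra sg br \<longleftrightarrow>
     vector_space sg \<and>
     (\<forall>x y z. br (x + y) z = br x z + br y z) \<and>
     (\<forall>x y z. br x (y + z) = br x y + br x z) \<and>
     (\<forall>c x y. br (sg c x) y = sg c (br x y)) \<and>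
     (\<forall>c x y. br x (sg c y) = sg c (br x y)) \<and>
     (\<forall>x. br x x = 0) \<and>
     (\<forall>x y z. br x (br y z) + br y (br z x) + br z (br x y) = 0)"

definition graded_lie_algebra ::
  "(complex \<Rightarrow> 'g \<Rightarrow> 'g) \<Rightarrow> ('g \<Rightarrow> 'g \<Rightarrow> 'g::ab_group_add) \<Rightarrow> (int \<Rightarrow> 'g set) \<Rightarrow> bool" where
  "graded_lie_algebra sg br G \<longleftrightarrow>
     lie_algebra sg br \<and>
     (\<forall>i. module.subspace sg (G i)) \<and>
     (\<forall>i. \<exists>B. finite B \<and> G i \<subseteq> module.span sg B) \<and>
     (\<forall>i j x y. x \<in> G i \<longrightarrow> y \<in> G j \<longrightarrow> br x y \<in> G (i + j)) \<and>
     (\<forall>x. \<exists>!f. finite {i. f i \<noteq> 0} \<and> (\<forall>i. f i \<in> G i) \<and> x = (\<Sum>i\<in>{i. f i \<noteq> 0}. f i))"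

definition gpr :: "(int \<Rightarrow> 'g set) \<Rightarrow> int \<Rightarrow> 'g \<Rightarrow> 'g::ab_group_add" where
  "gpr G i x = (THE f. finite {i. f i \<noteq> 0} \<and> (\<forall>i. f i \<in> G i) \<and> x = (\<Sum>i\<in>{i. f i \<noteq> 0}. f i)) i"

definition nplus :: "(int \<Rightarrow> 'g set) \<Rightarrow> 'g::ab_group_add set" where
  "nplus G = {x. \<forall>i\<le>0. gpr G i x = 0}"

definition nminus :: "(int \<Rightarrow> 'g set) \<Rightarrow> 'g::ab_group_add set" where
  "nminus G = {x. \<forall>i\<ge>0. gpr G i x = 0}"

definition pplus :: "(int \<Rightarrow> 'g set) \<Rightarrow> 'g::ab_group_add set" where
  "pplus G = {x. \<forall>i<0. gpr G i x = 0}"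

text \<open>Only the values of chi on G 0 matter.\<close>

definition nonsingular_character ::
  "(complex \<Rightarrow> 'g \<Rightarrow> 'g) \<Rightarrow> ('g \<Rightarrow> 'g \<Rightarrow> 'g::ab_group_add) \<Rightarrow> (int \<Rightarrow> 'g set) \<Rightarrow> ('g \<Rightarrow> complex) \<Rightarrow> bool" where
  "nonsingular_character sg br G chi \<longleftrightarrow>
     (\<forall>x\<in>G 0. \<forall>y\<in>G 0. chi (x + y) = chi x + chi y) \<and>
     (\<forall>c. \<forall>x\<in>G 0. chi (sg c x) = c * chi x) \<and>
     (\<forall>x\<in>G 0. \<forall>y\<in>G 0. chi (br x y) = 0) \<and>
     (\<forall>u\<in>nplus G. u \<noteq> 0 \<longrightarrow> (\<exists>v\<in>nminus G. chi (gpr G 0 (br u v)) \<noteq> 0)) \<and>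
     (\<forall>v\<in>nminus G. v \<noteq> 0 \<longrightarrow> (\<exists>u\<in>nplus G. chi (gpr G 0 (br u v)) \<noteq> 0))"

definition lie_module ::
  "(complex \<Rightarrow> 'g \<Rightarrow> 'g) \<Rightarrow> ('g \<Rightarrow> 'g \<Rightarrow> 'g::ab_group_add) \<Rightarrow>
   (complex \<Rightarrow> 'v \<Rightarrow> 'v) \<Rightarrow> ('g \<Rightarrow> 'v \<Rightarrow> 'v::ab_group_add) \<Rightarrow> bool" where
  "lie_module sg br sv act \<longleftrightarrow>
     vector_space sv \<and>
     (\<forall>x y v. act (x + y) v = act x v + act y v) \<and>
     (\<forall>c x v. act (sg c x) v = sv c (act x v)) \<and>
     (\<forall>x v w. act x (v + w) = act x v + act x w) \<and>
     (\<forall>x c v. act x (sv c v) = sv c (act x v)) \<and>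
     (\<forall>x y v. act (br x y) v = act x (act y v) - act y (act x v))"

text \<open>Elements of the free associative algebra C<g> on the underlying set of g:
finitely supported functions on words.\<close>

type_synonym 'g fa = "'g list \<Rightarrow> complex"

definition fa_fin :: "'g fa \<Rightarrow> bool" where
  "fa_fin a \<longleftrightarrow> finite {w. a w \<noteq> 0}"

definition fa_zero :: "'g fa" where "fa_zero = (\<lambda>w. 0)"
definition fa_add :: "'g fa \<Rightarrow> 'g fa \<Rightarrow> 'g fa" where "fa_add a b = (\<lambda>w. a w + b w)"
definition fa_diff :: "'g fa \<Rightarrow> 'g fa \<Rightarrow> 'g fa" where "fa_diff a b = (\<lambda>w. a w - b w)"
definition fa_smul :: "complex \<Rightarrow> 'g fa \<Rightarrow> 'g fa" where "fa_smul c a = (\<lambda>w. c * a w)"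
definition fa_mul :: "'g fa \<Rightarrow> 'g fa \<Rightarrow> 'g fa" where
  "fa_mul a b = (\<lambda>w. \<Sum>k\<le>length w. a (take k w) * b (drop k w))"
definition fa_word :: "'g list \<Rightarrow> 'g fa" where "fa_word u = (\<lambda>w. if w = u then 1 else 0)"
definition fa_one :: "'g fa" where "fa_one = fa_word []"
definition fa_gen :: "'g \<Rightarrow> 'g fa" where "fa_gen x = fa_word [x]"

text \<open>The two-sided ideal of C<g> whose quotient is U g: generated by linearity of
the generators and by x y - y x - [x,y].\<close>

inductive_set ug_ideal :: "(complex \<Rightarrow> 'g \<Rightarrow> 'g) \<Rightarrow> ('g \<Rightarrow> 'g \<Rightarrow> 'g::ab_group_add) \<Rightarrow> 'g fa set"
  for sg br where
  ug_add_gen: "fa_diff (fa_gen (x + y)) (fa_add (fa_gen x) (fa_gen y)) \<in> ug_ideal sg br"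
| ug_smul_gen: "fa_diff (fa_gen (sg c x)) (fa_smul c (fa_gen x)) \<in> ug_ideal sg br"
| ug_comm: "fa_diff (fa_diff (fa_mul (fa_gen x) (fa_gen y)) (fa_mul (fa_gen y) (fa_gen x))) (fa_gen (br x y)) \<in> ug_ideal sg br"
| ug_zero: "fa_zero \<in> ug_ideal sg br"
| ug_add: "a \<in> ug_ideal sg br \<Longrightarrow> b \<in> ug_ideal sg br \<Longrightarrow> fa_add a b \<in> ug_ideal sg br"
| ug_smul: "a \<in> ug_ideal sg br \<Longrightarrow> fa_smul c a \<in> ug_ideal sg br"
| ug_lmul: "a \<in> ug_ideal sg br \<Longrightarrow> fa_fin p \<Longrightarrow> fa_mul p a \<in> ug_ideal sg br"
| ug_rmul: "a \<in> ug_ideal sg br \<Longrightarrow> fa_fin p \<Longrightarrow> fa_mul a p \<in> ug_ideal sg br"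

text \<open>The generalized Verma module M^+_lambda = U g (x)_{U p_+} chi_lambda
= U g / U g {x - chi_lambda(x) | x in p_+}, presented as C<g> modulo the left
ideal verma_ideal (which contains ug_ideal).  Here p_+ acts on chi_lambda by
x |-> lambda * chi(x_0) (so n_+ acts by zero).  M^+_lambda is the quotient
{a. fa_fin a} / verma_ideal, g acts by left multiplication with fa_gen x and
the generating vector v_lambda is the class of fa_one.\<close>

inductive_set verma_ideal ::
  "(complex \<Rightarrow> 'g \<Rightarrow> 'g) \<Rightarrow> ('g \<Rightarrow> 'g \<Rightarrow> 'g::ab_group_add) \<Rightarrow> (int \<Rightarrow> 'g set) \<Rightarrow> ('g \<Rightarrow> complex) \<Rightarrow> complex \<Rightarrow> 'g fa set"
  for sg br G chi lam where
  vi_ug: "a \<in> ug_ideal sg br \<Longrightarrow> a \<in> verma_ideal sg br G chi lam"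
| vi_par: "x \<in> pplus G \<Longrightarrow> fa_diff (fa_gen x) (fa_smul (lam * chi (gpr G 0 x)) fa_one) \<in> verma_ideal sg br G chi lam"
| vi_add: "a \<in> verma_ideal sg br G chi lam \<Longrightarrow> b \<in> verma_ideal sg br G chi lam \<Longrightarrow> fa_add a b \<in> verma_ideal sg br G chi lam"
| vi_smul: "a \<in> verma_ideal sg br G chi lam \<Longrightarrow> fa_smul c a \<in> verma_ideal sg br G chi lam"
| vi_lmul: "a \<in> verma_ideal sg br G chi lam \<Longrightarrow> fa_fin p \<Longrightarrow> fa_mul p a \<in> verma_ideal sg br G chi lam"

text \<open>Irreducibility of M^+_lambda: M is nonzero and every g-submodule
(= subspace L/J with J = verma_ideal, J \<subseteq> L \<subseteq> C<g>, stable under g) is 0 or M.\<close>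

definition verma_irreducible ::
  "(complex \<Rightarrow> 'g \<Rightarrow> 'g) \<Rightarrow> ('g \<Rightarrow> 'g \<Rightarrow> 'g::ab_group_add) \<Rightarrow> (int \<Rightarrow> 'g set) \<Rightarrow> ('g \<Rightarrow> complex) \<Rightarrow> complex \<Rightarrow> bool" where
  "verma_irreducible sg br G chi lam \<longleftrightarrow>
     fa_one \<notin> verma_ideal sg br G chi lam \<and>
     (\<forall>L. verma_ideal sg br G chi lam \<subseteq> L \<and> L \<subseteq> {a. fa_fin a} \<and>
          (\<forall>a\<in>L. \<forall>b\<in>L. fa_add a b \<in> L) \<and> (\<forall>c. \<forall>a\<in>L. fa_smul c a \<in> L) \<and>
          (\<forall>x. \<forall>a\<in>L. fa_mul (fa_gen x) a \<in> L)
        \<longrightarrow> L = verma_ideal sg br G chi lam \<or> L = {a. fa_fin a})"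

text \<open>(U n_-)_{-n}, as a subspace of C<g>: the span of the monomials
y_1 ... y_k with y_j in G d_j, d_j < 0 and d_1 + ... + d_k = -n.\<close>

inductive_set un_minus_deg :: "(int \<Rightarrow> 'g set) \<Rightarrow> nat \<Rightarrow> 'g fa set" for G n where
  und_zero: "fa_zero \<in> un_minus_deg G n"
| und_mono: "(\<forall>(d, y)\<in>set ds. d < 0 \<and> y \<in> G d) \<Longrightarrow> sum_list (map fst ds) = - int n \<Longrightarrow>
             fa_word (map snd ds) \<in> un_minus_deg G n"
| und_add: "a \<in> un_minus_deg G n \<Longrightarrow> b \<in> un_minus_deg G n \<Longrightarrow> fa_add a b \<in> un_minus_deg G n"
| und_smul: "a \<in> un_minus_deg G n \<Longrightarrow> fa_smul c a \<in> un_minus_deg G n"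

text \<open>Representatives of elements of (M^+_lambda)_{-n} = (U n_-)_{-n} v_lambda.\<close>

definition verma_comp ::
  "(complex \<Rightarrow> 'g \<Rightarrow> 'g) \<Rightarrow> ('g \<Rightarrow> 'g \<Rightarrow> 'g::ab_group_add) \<Rightarrow> (int \<Rightarrow> 'g set) \<Rightarrow> ('g \<Rightarrow> complex) \<Rightarrow> complex \<Rightarrow> nat \<Rightarrow> 'g fa set" where
  "verma_comp sg br G chi lam n =
     {m. fa_fin m \<and> (\<exists>a\<in>un_minus_deg G n. fa_diff m a \<in> verma_ideal sg br G chi lam)}"

text \<open>A finite formal sum sum_k m_k (x) v_k (m_k representatives of elements of
M, v_k in V) is zero in M (x) V iff sum_k f(m_k) v_k = 0 for every linear
functional f on M (i.e. every linear functional on C<g> vanishing on the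
verma ideal).\<close>

definition tensor_zero ::
  "(complex \<Rightarrow> 'g \<Rightarrow> 'g) \<Rightarrow> ('g \<Rightarrow> 'g \<Rightarrow> 'g::ab_group_add) \<Rightarrow> (int \<Rightarrow> 'g set) \<Rightarrow> ('g \<Rightarrow> complex) \<Rightarrow> complex \<Rightarrow>
   (complex \<Rightarrow> 'v \<Rightarrow> 'v::ab_group_add) \<Rightarrow> ('g fa \<times> 'v) list \<Rightarrow> bool" where
  "tensor_zero sg br G chi lam sv ts \<longleftrightarrow>
     (\<forall>f :: 'g fa \<Rightarrow> complex.
        (\<forall>a b. fa_fin a \<longrightarrow> fa_fin b \<longrightarrow> f (fa_add a b) = f a + f b) \<and>
        (\<forall>c a. fa_fin a \<longrightarrow> f (fa_smul c a) = c * f a) \<and>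
        (\<forall>a\<in>verma_ideal sg br G chi lam. f a = 0)
      \<longrightarrow> sum_list (map (\<lambda>(m, v). sv (f m) v) ts) = 0)"

text \<open>An element z of M check-tensor V = prod_n M_{-n} (x) V is represented by
its homogeneous components: z n is a finite formal sum in M_{-n} (x) V.\<close>

type_synonym ('g, 'v) ctensor = "nat \<Rightarrow> ('g fa \<times> 'v) list"

definition ctensor_wf ::
  "(complex \<Rightarrow> 'g \<Rightarrow> 'g) \<Rightarrow> ('g \<Rightarrow> 'g \<Rightarrow> 'g::ab_group_add) \<Rightarrow> (int \<Rightarrow> 'g set) \<Rightarrow> ('g \<Rightarrow> complex) \<Rightarrow> complex \<Rightarrow>
   ('g, 'v) ctensor \<Rightarrow> bool" where
  "ctensor_wf sg br G chi lam z \<longleftrightarrow> (\<forall>n. \<forall>(m, v)\<in>set (z n). m \<in> verma_comp sg br G chi lam n)"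

text \<open>Action of x in g on M check-tensor V through Delta(x) = x (x) 1 + 1 (x) x:
the degree -n component of x.z collects x_i . z_{n+i} (x_i of degree i maps
M_{-(n+i)} to M_{-n}) and (1 (x) x) z_n.\<close>

definition ctensor_act ::
  "(int \<Rightarrow> 'g set) \<Rightarrow> ('g \<Rightarrow> 'v \<Rightarrow> 'v) \<Rightarrow> 'g::ab_group_add \<Rightarrow> ('g, 'v) ctensor \<Rightarrow> ('g, 'v) ctensor" where
  "ctensor_act G act x z = (\<lambda>n.
     concat (map (\<lambda>i. map (\<lambda>(m, v). (fa_mul (fa_gen (gpr G i x)) m, v)) (z (nat (int n + i))))
                 (sorted_list_of_set {i. gpr G i x \<noteq> 0 \<and> 0 \<le> int n + i}))
     @ map (\<lambda>(m, v). (m, act x v)) (z n))"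

definition ctensor_invariant ::
  "(complex \<Rightarrow> 'g \<Rightarrow> 'g) \<Rightarrow> ('g \<Rightarrow> 'g \<Rightarrow> 'g::ab_group_add) \<Rightarrow> (int \<Rightarrow> 'g set) \<Rightarrow> ('g \<Rightarrow> complex) \<Rightarrow> complex \<Rightarrow>
   (complex \<Rightarrow> 'v \<Rightarrow> 'v::ab_group_add) \<Rightarrow> ('g \<Rightarrow> 'v \<Rightarrow> 'v) \<Rightarrow> ('g, 'v) ctensor \<Rightarrow> bool" where
  "ctensor_invariant sg br G chi lam sv act z \<longleftrightarrow>
     (\<forall>x n. tensor_zero sg br G chi lam sv (ctensor_act G act x z n))"

text \<open>z \<in> v_lambda (x) w + (U n_-)_{<0} v_lambda check-tensor V:
the degree-0 component of z equals v_lambda (x) w (the components of degree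
-n, n > 0, lie in M_{-n} (x) V by well-formedness).\<close>

definition ctensor_leading ::
  "(complex \<Rightarrow> 'g \<Rightarrow> 'g) \<Rightarrow> ('g \<Rightarrow> 'g \<Rightarrow> 'g::ab_group_add) \<Rightarrow> (int \<Rightarrow> 'g set) \<Rightarrow> ('g \<Rightarrow> complex) \<Rightarrow> complex \<Rightarrow>
   (complex \<Rightarrow> 'v \<Rightarrow> 'v::ab_group_add) \<Rightarrow> 'v \<Rightarrow> ('g, 'v) ctensor \<Rightarrow> bool" where
  "ctensor_leading sg br G chi lam sv w z \<longleftrightarrow>
     tensor_zero sg br G chi lam sv (z 0 @ [(fa_one, - w)])"

definition ctensor_eq ::
  "(complex \<Rightarrow> 'g \<Rightarrow> 'g) \<Rightarrow> ('g \<Rightarrow> 'g \<Rightarrow> 'g::ab_group_add) \<Rightarrow> (int \<Rightarrow> 'g set) \<Rightarrow> ('g \<Rightarrow> complex) \<Rightarrow> complex \<Rightarrow>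
   (complex \<Rightarrow> 'v \<Rightarrow> 'v::ab_group_add) \<Rightarrow> ('g, 'v) ctensor \<Rightarrow> ('g, 'v) ctensor \<Rightarrow> bool" where
  "ctensor_eq sg br G chi lam sv z z' \<longleftrightarrow>
     (\<forall>n. tensor_zero sg br G chi lam sv (z n @ map (\<lambda>(m, v). (m, - v)) (z' n)))"

end

theory Submission
  imports Defs "HOL-Library.Function_Algebras"
begin

text \<open>Let \<open>u = z - z'\<close>. Its component of degree \<open>0\<close> vanishes, and we show by induction that so
  does its component \<open>u\<^sub>n\<close> of degree \<open>-n\<close>. For \<open>x\<close> of degree \<open>i > 0\<close>, the degree \<open>i - n\<close> part of
  \<open>x \<cdot> u = 0\<close> is \<open>(x \<otimes> 1) u\<^sub>n + (1 \<otimes> x) u\<^sub>n\<^sub>-\<^sub>i\<close>, and \<open>u\<^sub>n\<^sub>-\<^sub>i = 0\<close>; so \<open>n\<^sub>+ \<otimes> 1\<close> kills \<open>u\<^sub>n\<close>.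
  Contracting the second factor with a linear functional \<open>\<psi>\<close> on \<open>V\<close> therefore gives a singular
  vector of degree \<open>-n < 0\<close> in \<open>M\<^sup>+\<^sub>\<lambda>\<close>. Commuting generators past words in \<open>n\<^sub>-\<close> (a form of PBW)
  shows that such a vector generates a submodule concentrated in degrees \<open>\<le> -n\<close>; it cannot
  contain \<open>v\<^sub>\<lambda>\<close>, so by irreducibility the vector is zero. Since the functionals \<open>\<psi>\<close> separate
  points, \<open>u\<^sub>n = 0\<close>.

  \<open>M\<^sup>+\<^sub>\<lambda>\<close> is presented as a quotient of the free algebra \<open>C<g>\<close>, where degrees are not directly
  available; they are detected instead by the automorphism that scales \<open>g\<^sub>i\<close> by \<open>2\<^sup>i\<close>.\<close>

lemmas fun_apply_simps = plus_fun_apply zero_fun_apply minus_apply uminus_apply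

declare fun_apply_simps[simp del]

lemma fa_add_eq_plus: "fa_add a b = a + b"
  by (simp add: fa_add_def fun_eq_iff fun_apply_simps)

lemma fa_zero_eq_zero: "fa_zero = 0"
  by (simp add: fa_zero_def fun_eq_iff fun_apply_simps)

lemma fa_diff_eq_minus: "fa_diff a b = a - b"
  by (simp add: fa_diff_def fun_eq_iff fun_apply_simps)

global_interpretation fa: vector_space "fa_smul :: complex \<Rightarrow> 'g fa \<Rightarrow> 'g fa"
  by unfold_locales (simp_all add: fa_smul_def fun_eq_iff fun_apply_simps algebra_simps)

lemma fa_fin_subspace: "fa.subspace {a. fa_fin a}"
proof -
  have "fa_fin (a + b)" if "fa_fin a" "fa_fin b" for a b :: "'g fa"
    using that unfolding fa_fin_def
    by (rule_tac finite_subset[of _ "{w. a w \<noteq> 0} \<union> {w. b w \<noteq> 0}"]) (auto simp: fun_apply_simps)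
  moreover have "fa_fin (fa_smul c a)" if "fa_fin a" for c and a :: "'g fa"
    using that unfolding fa_fin_def fa_smul_def by (rule finite_subset[rotated]) auto
  ultimately show ?thesis
    unfolding fa.subspace_def by (auto simp: fa_fin_def fun_apply_simps)
qed

lemma fa_fin_zero [simp]: "fa_fin 0"
  using fa.subspace_0[OF fa_fin_subspace] by simp

lemma fa_fin_add [simp]: "fa_fin a \<Longrightarrow> fa_fin b \<Longrightarrow> fa_fin (a + b)"
  using fa.subspace_add[OF fa_fin_subspace] by simp

lemma fa_fin_smul [simp]: "fa_fin a \<Longrightarrow> fa_fin (fa_smul c a)"
  using fa.subspace_scale[OF fa_fin_subspace] by simp

lemma fa_fin_diff [simp]: "fa_fin a \<Longrightarrow> fa_fin b \<Longrightarrow> fa_fin (a - b)"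
  using fa.subspace_diff[OF fa_fin_subspace] by simp

lemma fa_fin_word [simp]: "fa_fin (fa_word u)"
  unfolding fa_fin_def fa_word_def by (rule finite_subset[of _ "{u}"]) auto

lemma fa_fin_one [simp]: "fa_fin fa_one"
  by (simp add: fa_one_def)

lemma fa_fin_gen [simp]: "fa_fin (fa_gen x)"
  by (simp add: fa_gen_def)

lemma fa_fin_mul [simp]:
  assumes "fa_fin a" "fa_fin b"
  shows "fa_fin (fa_mul a b)"
proof -
  have "{w. fa_mul a b w \<noteq> 0} \<subseteq> (\<lambda>(u, v). u @ v) ` ({u. a u \<noteq> 0} \<times> {v. b v \<noteq> 0})"
  proof
    fix w assume "w \<in> {w. fa_mul a b w \<noteq> 0}"
    then obtain k where "a (take k w) * b (drop k w) \<noteq> 0"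
      unfolding fa_mul_def by (meson mem_Collect_eq sum.neutral)
    then show "w \<in> (\<lambda>(u, v). u @ v) ` ({u. a u \<noteq> 0} \<times> {v. b v \<noteq> 0})"
      by (intro rev_image_eqI[of "(take k w, drop k w)"]) auto
  qed
  moreover have "finite ((\<lambda>(u, v). u @ v) ` ({u. a u \<noteq> 0} \<times> {v. b v \<noteq> 0}))"
    using assms unfolding fa_fin_def by simp
  ultimately show ?thesis
    unfolding fa_fin_def by (rule finite_subset)
qed

lemma fa_mul_add_left: "fa_mul (a + b) c = fa_mul a c + fa_mul b c"
  by (simp add: fa_mul_def fun_eq_iff fun_apply_simps algebra_simps sum.distrib)

lemma fa_mul_add_right: "fa_mul a (b + c) = fa_mul a b + fa_mul a c"
  by (simp add: fa_mul_def fun_eq_iff fun_apply_simps algebra_simps sum.distrib)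

lemma fa_mul_diff_left: "fa_mul (a - b) c = fa_mul a c - fa_mul b c"
  by (simp add: fa_mul_def fun_eq_iff fun_apply_simps algebra_simps sum_subtractf)

lemma fa_mul_diff_right: "fa_mul a (b - c) = fa_mul a b - fa_mul a c"
  by (simp add: fa_mul_def fun_eq_iff fun_apply_simps algebra_simps sum_subtractf)

lemma fa_mul_zero_left [simp]: "fa_mul 0 a = 0"
  by (simp add: fa_mul_def fun_eq_iff fun_apply_simps)

lemma fa_mul_zero_right [simp]: "fa_mul a 0 = 0"
  by (simp add: fa_mul_def fun_eq_iff fun_apply_simps)

lemma fa_mul_smul_left: "fa_mul (fa_smul k a) c = fa_smul k (fa_mul a c)"
  by (simp add: fa_mul_def fa_smul_def fun_eq_iff algebra_simps sum_distrib_left)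

lemma fa_mul_smul_right: "fa_mul a (fa_smul k c) = fa_smul k (fa_mul a c)"
  by (simp add: fa_mul_def fa_smul_def fun_eq_iff algebra_simps sum_distrib_left)

lemma fa_mul_sum_left: "fa_mul (sum f S) c = (\<Sum>i\<in>S. fa_mul (f i) c)"
  by (induction S rule: infinite_finite_induct) (simp_all add: fa_mul_add_left)

lemma fa_mul_word: "fa_mul (fa_word u) (fa_word v) = fa_word (u @ v)"
proof
  fix w
  have split: "take k w = u \<and> drop k w = v \<longleftrightarrow> k = length u \<and> w = u @ v"
    if "k \<le> length w" for k
    using that append_take_drop_id[of k w] by auto
  have "fa_mul (fa_word u) (fa_word v) w = (\<Sum>k\<le>length w. if k = length u \<and> w = u @ v then 1 else 0)"
    unfolding fa_mul_def fa_word_def by (intro sum.cong refl) (auto simp: split)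
  then show "fa_mul (fa_word u) (fa_word v) w = fa_word (u @ v) w"
    by (auto simp: fa_word_def)
qed

lemma fa_word_Cons: "fa_word (x # u) = fa_mul (fa_gen x) (fa_word u)"
  by (simp add: fa_gen_def fa_mul_word)

lemma fa_mul_one_left [simp]: "fa_mul fa_one a = a"
proof
  fix w
  have "fa_mul fa_one a w = (\<Sum>k\<le>length w. if k = 0 then a w else 0)"
    unfolding fa_mul_def fa_one_def fa_word_def by (intro sum.cong) auto
  then show "fa_mul fa_one a w = a w" by simp
qed

lemma fa_mul_one_right [simp]: "fa_mul a fa_one = a"
proof
  fix w
  have "fa_mul a fa_one w = (\<Sum>k\<le>length w. if k = length w then a w else 0)"
    unfolding fa_mul_def fa_one_def fa_word_def by (intro sum.cong) auto
  then show "fa_mul a fa_one w = a w" by simp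
qed

lemma fa_mul_assoc: "fa_mul (fa_mul a b) c = fa_mul a (fa_mul b c)"
proof
  fix w :: "'a list"
  define n where "n = length w"
  define F where "F j k = a (take j w) * b (take (k - j) (drop j w)) * c (drop k w)" for j k
  have "fa_mul (fa_mul a b) c w = (\<Sum>k\<le>n. \<Sum>j\<le>k. F j k)"
    unfolding fa_mul_def F_def n_def sum_distrib_right
    by (intro sum.cong refl) (auto simp: drop_take min_def)
  also have "\<dots> = (\<Sum>(j, l)\<in>{(j, l). j + l \<le> n}. F j (j + l))"
    by (simp add: sum.triangle_reindex_eq)
  also have "{(j, l). j + l \<le> n} = (SIGMA j:{..n}. {..n - j})"
    by auto
  also have "(\<Sum>(j, l)\<in>\<dots>. F j (j + l)) = (\<Sum>j\<le>n. \<Sum>l\<le>n - j. F j (j + l))"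
    by (simp add: sum.Sigma)
  also have "\<dots> = fa_mul a (fa_mul b c) w"
    unfolding fa_mul_def F_def n_def sum_distrib_left
    by (intro sum.cong refl) (auto simp: ac_simps)
  finally show "fa_mul (fa_mul a b) c w = fa_mul a (fa_mul b c) w" .
qed

locale graded_lie =
  fixes sg :: "complex \<Rightarrow> 'g \<Rightarrow> 'g::ab_group_add"
    and br :: "'g \<Rightarrow> 'g \<Rightarrow> 'g"
    and G :: "int \<Rightarrow> 'g set"
  assumes graded: "graded_lie_algebra sg br G"
begin

lemma lie_vector_space: "vector_space sg"
  using graded unfolding graded_lie_algebra_def lie_algebra_def by blast

sublocale g: vector_space sg
  by (rule lie_vector_space)

lemma br_add_left: "br (x + y) z = br x z + br y z"
  and br_add_right: "br x (y + z) = br x y + br x z"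
  and br_scale_left: "br (sg c x) y = sg c (br x y)"
  and br_scale_right: "br x (sg c y) = sg c (br x y)"
  using graded unfolding graded_lie_algebra_def lie_algebra_def by simp_all

lemma br_sum_left: "br (sum f S) y = (\<Sum>i\<in>S. br (f i) y)"
proof -
  interpret additive "\<lambda>x. br x y"
    by standard (rule br_add_left)
  show ?thesis by (rule sum)
qed

lemma br_sum_right: "br y (sum f S) = (\<Sum>i\<in>S. br y (f i))"
proof -
  interpret additive "br y"
    by standard (rule br_add_right)
  show ?thesis by (rule sum)
qed

lemma G_subspace: "g.subspace (G i)"
  using graded unfolding graded_lie_algebra_def by blast

lemma G_zero [simp]: "0 \<in> G i"
  using g.subspace_0[OF G_subspace] .

lemma G_add: "x \<in> G i \<Longrightarrow> y \<in> G i \<Longrightarrow> x + y \<in> G i"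
  using g.subspace_add[OF G_subspace] .

lemma G_scale: "x \<in> G i \<Longrightarrow> sg c x \<in> G i"
  using g.subspace_scale[OF G_subspace] .

lemma G_br: "x \<in> G i \<Longrightarrow> y \<in> G j \<Longrightarrow> br x y \<in> G (i + j)"
  using graded unfolding graded_lie_algebra_def by blast

definition homogeneous_decomposition :: "'g \<Rightarrow> (int \<Rightarrow> 'g) \<Rightarrow> bool" where
  "homogeneous_decomposition x f \<longleftrightarrow>
     finite {i. f i \<noteq> 0} \<and> (\<forall>i. f i \<in> G i) \<and> x = (\<Sum>i\<in>{i. f i \<noteq> 0}. f i)"

lemma homogeneous_decomposition_gpr: "homogeneous_decomposition x (\<lambda>i. gpr G i x)"
proof -
  have "\<exists>!f. homogeneous_decomposition x f"
    using graded unfolding graded_lie_algebra_def homogeneous_decomposition_def by blast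
  then show ?thesis
    unfolding gpr_def homogeneous_decomposition_def[symmetric] by (rule theI')
qed

lemma gpr_in_G [simp]: "gpr G i x \<in> G i"
  and finite_gpr_nonzero [simp]: "finite {i. gpr G i x \<noteq> 0}"
  and sum_gpr: "x = (\<Sum>i\<in>{i. gpr G i x \<noteq> 0}. gpr G i x)"
  using homogeneous_decomposition_gpr[of x] unfolding homogeneous_decomposition_def by blast+

lemma sum_gpr_superset:
  assumes "finite S" "{i. gpr G i x \<noteq> 0} \<subseteq> S"
  shows "x = (\<Sum>i\<in>S. gpr G i x)"
proof -
  have "(\<Sum>i\<in>S. gpr G i x) = (\<Sum>i\<in>{i. gpr G i x \<noteq> 0}. gpr G i x)"
    by (rule sum.mono_neutral_right[OF assms]) blast
  then show ?thesis
    using sum_gpr[of x] by simp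
qed

lemma gpr_unique:
  assumes "finite S" "\<And>i. f i \<in> G i" "\<And>i. i \<notin> S \<Longrightarrow> f i = 0" "x = (\<Sum>i\<in>S. f i)"
  shows "gpr G i x = f i"
proof -
  have sub: "{i. f i \<noteq> 0} \<subseteq> S"
    using assms(3) by blast
  have "homogeneous_decomposition x f"
    unfolding homogeneous_decomposition_def
    using finite_subset[OF sub assms(1)] assms(2,4) sum.mono_neutral_right[OF assms(1) sub] by auto
  moreover have "\<exists>!f. homogeneous_decomposition x f"
    using graded unfolding graded_lie_algebra_def homogeneous_decomposition_def by blast
  ultimately show ?thesis
    using homogeneous_decomposition_gpr[of x] by (metis (no_types))
qed

lemma gpr_ext: "(\<And>i. gpr G i x = gpr G i y) \<Longrightarrow> x = y"
  using sum_gpr[of x] sum_gpr[of y] by simp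

lemma gpr_add: "gpr G i (x + y) = gpr G i x + gpr G i y"
proof (rule gpr_unique[where S="{i. gpr G i x \<noteq> 0} \<union> {i. gpr G i y \<noteq> 0}"])
  show "x + y = (\<Sum>i\<in>{i. gpr G i x \<noteq> 0} \<union> {i. gpr G i y \<noteq> 0}. gpr G i x + gpr G i y)"
    by (simp add: sum.distrib flip: sum_gpr_superset)
qed (auto simp: G_add)

lemma gpr_scale: "gpr G i (sg c x) = sg c (gpr G i x)"
proof (rule gpr_unique[where S="{i. gpr G i x \<noteq> 0}"])
  show "sg c x = (\<Sum>i\<in>{i. gpr G i x \<noteq> 0}. sg c (gpr G i x))"
    by (subst sum_gpr[of x]) (simp add: g.scale_sum_right)
qed (auto simp: G_scale)

lemma gpr_homogeneous: "y \<in> G d \<Longrightarrow> gpr G i y = (if i = d then y else 0)"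
  by (rule gpr_unique[where S="{d}"]) auto

definition grade_scale :: "complex \<Rightarrow> 'g \<Rightarrow> 'g" where
  "grade_scale t x = (\<Sum>i\<in>{i. gpr G i x \<noteq> 0}. sg (t powi i) (gpr G i x))"

lemma gpr_grade_scale: "gpr G i (grade_scale t x) = sg (t powi i) (gpr G i x)"
  unfolding grade_scale_def by (rule gpr_unique[where S="{i. gpr G i x \<noteq> 0}"]) (auto simp: G_scale)

lemma grade_scale_add: "grade_scale t (x + y) = grade_scale t x + grade_scale t y"
  by (rule gpr_ext) (simp add: gpr_grade_scale gpr_add g.scale_right_distrib)

lemma grade_scale_scale: "grade_scale t (sg c x) = sg c (grade_scale t x)"
  by (rule gpr_ext) (simp add: gpr_grade_scale gpr_scale mult.commute)

lemma grade_scale_homogeneous: "y \<in> G d \<Longrightarrow> grade_scale t y = sg (t powi d) y"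
  by (rule gpr_ext) (simp add: gpr_grade_scale gpr_scale gpr_homogeneous)

lemma grade_scale_sum: "grade_scale t (sum f S) = (\<Sum>i\<in>S. grade_scale t (f i))"
  by (induction S rule: infinite_finite_induct)
     (simp_all add: grade_scale_add grade_scale_homogeneous[OF G_zero[of 0]])

lemma grade_scale_br:
  assumes "t \<noteq> 0"
  shows "grade_scale t (br x y) = br (grade_scale t x) (grade_scale t y)"
proof -
  define Sx where "Sx = {i. gpr G i x \<noteq> 0}"
  define Sy where "Sy = {i. gpr G i y \<noteq> 0}"
  have homogeneous: "grade_scale t (br (gpr G i x) (gpr G j y)) =
      br (grade_scale t (gpr G i x)) (grade_scale t (gpr G j y))" for i j
    using assms
    by (simp add: grade_scale_homogeneous[OF G_br[OF gpr_in_G gpr_in_G]]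
        grade_scale_homogeneous[OF gpr_in_G] br_scale_left br_scale_right power_int_add)
  have x: "x = (\<Sum>i\<in>Sx. gpr G i x)" and y: "y = (\<Sum>j\<in>Sy. gpr G j y)"
    unfolding Sx_def Sy_def by (rule sum_gpr)+
  have "grade_scale t (br x y) = grade_scale t (br (\<Sum>i\<in>Sx. gpr G i x) (\<Sum>j\<in>Sy. gpr G j y))"
    by (rule arg_cong[OF arg_cong2[OF x y]])
  also have "\<dots> = br (grade_scale t (\<Sum>i\<in>Sx. gpr G i x)) (grade_scale t (\<Sum>j\<in>Sy. gpr G j y))"
    unfolding br_sum_left br_sum_right grade_scale_sum homogeneous ..
  finally show ?thesis
    by (simp only: x[symmetric] y[symmetric])
qed

lemma grade_scale_inverse: "t \<noteq> 0 \<Longrightarrow> grade_scale (inverse t) (grade_scale t x) = x"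
  by (rule gpr_ext) (simp add: gpr_grade_scale power_int_inverse field_simps)

lemma pplus_homogeneous: "x \<in> G i \<Longrightarrow> 0 \<le> i \<Longrightarrow> x \<in> pplus G"
  unfolding pplus_def by (simp add: gpr_homogeneous)

lemma grade_scale_pplus: "x \<in> pplus G \<Longrightarrow> grade_scale t x \<in> pplus G"
  unfolding pplus_def by (simp add: gpr_grade_scale)

end

lemma ug_ideal_subspace: "fa.subspace (ug_ideal sg br)"
  unfolding fa.subspace_def
  using ug_ideal.ug_zero[of sg br] ug_ideal.ug_add[of _ sg br] ug_ideal.ug_smul[of _ sg br]
  by (auto simp: fa_zero_eq_zero fa_add_eq_plus)

lemma zero_ug_ideal [simp]: "0 \<in> ug_ideal sg br"
  using fa.subspace_0[OF ug_ideal_subspace] .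

lemma ug_ideal_fin: "a \<in> ug_ideal sg br \<Longrightarrow> fa_fin a"
  by (induction rule: ug_ideal.induct) (simp_all add: fa_diff_eq_minus fa_add_eq_plus fa_zero_eq_zero)

lemma ug_ideal_gen_add: "fa_gen (x + y) - (fa_gen x + fa_gen y) \<in> ug_ideal sg br"
  using ug_add_gen[of x y sg br] by (simp add: fa_add_eq_plus fa_diff_eq_minus)

lemma ug_ideal_gen_scale: "fa_gen (sg c x) - fa_smul c (fa_gen x) \<in> ug_ideal sg br"
  using ug_smul_gen[of sg c x br] by (simp add: fa_diff_eq_minus)

lemma ug_ideal_gen_commutator:
  "fa_mul (fa_gen x) (fa_gen y) - fa_mul (fa_gen y) (fa_gen x) - fa_gen (br x y) \<in> ug_ideal sg br"
  using ug_comm[of x y br sg] by (simp add: fa_diff_eq_minus)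

lemma ug_ideal_gen_zero: "fa_gen 0 \<in> ug_ideal sg br"
  using fa.subspace_neg[OF ug_ideal_subspace ug_ideal_gen_add[of 0 0]] by simp

lemma ug_ideal_gen_sum: "finite S \<Longrightarrow> fa_gen (sum f S) - (\<Sum>i\<in>S. fa_gen (f i)) \<in> ug_ideal sg br"
proof (induction S rule: finite_induct)
  case empty
  show ?case
    using ug_ideal_gen_zero by simp
next
  case (insert a S)
  have "fa_gen (sum f (insert a S)) - (\<Sum>i\<in>insert a S. fa_gen (f i)) =
     (fa_gen (f a + sum f S) - (fa_gen (f a) + fa_gen (sum f S))) +
     (fa_gen (sum f S) - (\<Sum>i\<in>S. fa_gen (f i)))"
    using insert by (simp add: algebra_simps)
  then show ?case
    using insert ug_ideal_gen_add fa.subspace_add[OF ug_ideal_subspace] by metis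
qed

lemma ug_ideal_commutator_mul:
  assumes "fa_fin r"
  shows "fa_mul (fa_gen x) (fa_mul (fa_gen y) r) - fa_mul (fa_gen y) (fa_mul (fa_gen x) r)
         - fa_mul (fa_gen (br x y)) r \<in> ug_ideal sg br"
proof -
  have "fa_mul (fa_mul (fa_gen x) (fa_gen y) - fa_mul (fa_gen y) (fa_gen x) - fa_gen (br x y)) r
      \<in> ug_ideal sg br"
    by (rule ug_rmul[OF ug_ideal_gen_commutator assms])
  then show ?thesis
    by (simp add: fa_mul_diff_left fa_mul_assoc)
qed

lemma subspace_gen_mul_commute:
  assumes S: "fa.subspace S" "ug_ideal sg br \<subseteq> S" and "fa_fin r"
    and "fa_mul (fa_gen y) (fa_mul (fa_gen x) r) \<in> S" "fa_mul (fa_gen (br x y)) r \<in> S"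
  shows "fa_mul (fa_gen x) (fa_mul (fa_gen y) r) \<in> S"
proof -
  have "(fa_mul (fa_gen x) (fa_mul (fa_gen y) r) - fa_mul (fa_gen y) (fa_mul (fa_gen x) r)
      - fa_mul (fa_gen (br x y)) r) + fa_mul (fa_gen y) (fa_mul (fa_gen x) r)
      + fa_mul (fa_gen (br x y)) r \<in> S"
    using assms(4,5) subsetD[OF S(2) ug_ideal_commutator_mul[OF assms(3), of x y]]
    by (intro fa.subspace_add[OF S(1)])
  then show ?thesis
    by simp
qed

lemma verma_ideal_subspace: "fa.subspace (verma_ideal sg br G chi lam)"
  unfolding fa.subspace_def
  using vi_ug[OF ug_ideal.ug_zero] verma_ideal.vi_add[of _ sg br G chi lam]
    verma_ideal.vi_smul[of _ sg br G chi lam]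
  by (auto simp: fa_zero_eq_zero fa_add_eq_plus)

lemma zero_verma_ideal [simp]: "0 \<in> verma_ideal sg br G chi lam"
  using fa.subspace_0[OF verma_ideal_subspace] .

lemma ug_ideal_subset_verma_ideal: "ug_ideal sg br \<subseteq> verma_ideal sg br G chi lam"
  using vi_ug by blast

lemma verma_ideal_fin: "a \<in> verma_ideal sg br G chi lam \<Longrightarrow> fa_fin a"
  by (induction rule: verma_ideal.induct) (simp_all add: ug_ideal_fin fa_diff_eq_minus fa_add_eq_plus)

lemma verma_ideal_pplus:
  "x \<in> pplus G \<Longrightarrow> fa_gen x - fa_smul (lam * chi (gpr G 0 x)) fa_one \<in> verma_ideal sg br G chi lam"
  using vi_par[of x G lam chi sg br] by (simp only: fa_diff_eq_minus)

lemma verma_irreducible_cases: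
  assumes "verma_irreducible sg br G chi lam" "fa.subspace L" "verma_ideal sg br G chi lam \<subseteq> L"
    "L \<subseteq> {a. fa_fin a}" "\<And>x a. a \<in> L \<Longrightarrow> fa_mul (fa_gen x) a \<in> L"
  shows "L = verma_ideal sg br G chi lam \<or> L = {a. fa_fin a}"
  using assms fa.subspace_add[OF assms(2)] fa.subspace_scale[OF assms(2)]
  unfolding verma_irreducible_def by (simp add: fa_add_eq_plus)

lemma un_minus_deg_subspace: "fa.subspace (un_minus_deg G n)"
  unfolding fa.subspace_def
  using und_zero[of G n] und_add[of _ G n] und_smul[of _ G n]
  by (auto simp: fa_zero_eq_zero fa_add_eq_plus)

lemma zero_un_minus_deg [simp]: "0 \<in> un_minus_deg G n"
  using fa.subspace_0[OF un_minus_deg_subspace] .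

lemma un_minus_deg_fin: "e \<in> un_minus_deg G n \<Longrightarrow> fa_fin e"
  by (induction rule: un_minus_deg.induct) (simp_all add: fa_zero_eq_zero fa_add_eq_plus)

section \<open>The grading automorphism of the free algebra\<close>

context graded_lie
begin

text \<open>The automorphism of \<open>C<g>\<close> induced by \<open>grade_scale 2\<close>; on the Verma module it acts on the
  component of degree \<open>-n\<close> by \<open>2 powi -n\<close>, so it detects degrees.\<close>

definition fa_grade_scale :: "'g fa \<Rightarrow> 'g fa" where
  "fa_grade_scale a = (\<lambda>w. a (map (grade_scale (1/2)) w))"

lemma map_grade_scale_half_eq_iff: "map (grade_scale (1/2)) w = u \<longleftrightarrow> w = map (grade_scale 2) u"
proof -
  have "grade_scale (1/2) (grade_scale 2 x) = x" "grade_scale 2 (grade_scale (1/2) x) = x" for x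
    using grade_scale_inverse[of 2 x] grade_scale_inverse[of "1/2" x] by (simp_all add: inverse_eq_divide)
  then have "map (grade_scale (1/2)) (map (grade_scale 2) u) = u"
    "map (grade_scale 2) (map (grade_scale (1/2)) w) = w"
    by (simp_all add: map_idI)
  then show ?thesis
    by auto
qed

lemma fa_grade_scale_add: "fa_grade_scale (a + b) = fa_grade_scale a + fa_grade_scale b"
  and fa_grade_scale_diff: "fa_grade_scale (a - b) = fa_grade_scale a - fa_grade_scale b"
  and fa_grade_scale_zero [simp]: "fa_grade_scale 0 = 0"
  and fa_grade_scale_smul: "fa_grade_scale (fa_smul c a) = fa_smul c (fa_grade_scale a)"
  by (simp_all add: fa_grade_scale_def fa_smul_def fun_eq_iff fun_apply_simps)

lemma fa_grade_scale_fin: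
  assumes "fa_fin a"
  shows "fa_fin (fa_grade_scale a)"
proof -
  have "{w. fa_grade_scale a w \<noteq> 0} \<subseteq> map (grade_scale 2) ` {u. a u \<noteq> 0}"
    unfolding fa_grade_scale_def using map_grade_scale_half_eq_iff by blast
  moreover have "finite (map (grade_scale 2) ` {u. a u \<noteq> 0})"
    using assms unfolding fa_fin_def by simp
  ultimately show ?thesis
    unfolding fa_fin_def by (rule finite_subset)
qed

lemma fa_grade_scale_mul: "fa_grade_scale (fa_mul p q) = fa_mul (fa_grade_scale p) (fa_grade_scale q)"
  by (simp add: fa_grade_scale_def fa_mul_def fun_eq_iff take_map drop_map)

lemma fa_grade_scale_word: "fa_grade_scale (fa_word u) = fa_word (map (grade_scale 2) u)"
  unfolding fa_grade_scale_def fa_word_def by (simp only: map_grade_scale_half_eq_iff)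

lemma fa_grade_scale_gen: "fa_grade_scale (fa_gen x) = fa_gen (grade_scale 2 x)"
  by (simp add: fa_gen_def fa_grade_scale_word)

lemma fa_grade_scale_one [simp]: "fa_grade_scale fa_one = fa_one"
  by (simp add: fa_one_def fa_grade_scale_word)

lemma fa_grade_scale_ug_ideal: "a \<in> ug_ideal sg br \<Longrightarrow> fa_grade_scale a \<in> ug_ideal sg br"
proof (induction rule: ug_ideal.induct)
  case (ug_add_gen x y)
  show ?case
    using ug_ideal.ug_add_gen[of "grade_scale 2 x" "grade_scale 2 y" sg br]
    by (simp only: fa_diff_eq_minus fa_add_eq_plus fa_grade_scale_diff fa_grade_scale_add
        fa_grade_scale_gen grade_scale_add)
next
  case (ug_smul_gen c x)
  show ?case
    using ug_ideal.ug_smul_gen[of sg c "grade_scale 2 x" br]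
    by (simp only: fa_diff_eq_minus fa_grade_scale_diff fa_grade_scale_smul fa_grade_scale_gen
        grade_scale_scale)
next
  case (ug_comm x y)
  have "grade_scale 2 (br x y) = br (grade_scale 2 x) (grade_scale 2 y)"
    by (simp add: grade_scale_br)
  then show ?case
    using ug_ideal.ug_comm[of "grade_scale 2 x" "grade_scale 2 y" br sg]
    by (simp only: fa_diff_eq_minus fa_grade_scale_diff fa_grade_scale_mul fa_grade_scale_gen)
qed (simp_all add: fa_zero_eq_zero fa_add_eq_plus fa_grade_scale_add fa_grade_scale_smul
    fa_grade_scale_mul fa_grade_scale_fin ug_ideal.intros fa.subspace_0[OF ug_ideal_subspace]
    fa.subspace_add[OF ug_ideal_subspace])

lemma fa_grade_scale_verma_ideal:
  "a \<in> verma_ideal sg br G chi lam \<Longrightarrow> fa_grade_scale a \<in> verma_ideal sg br G chi lam"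
proof (induction rule: verma_ideal.induct)
  case (vi_par x)
  then show ?case
    using verma_ideal_pplus[OF grade_scale_pplus[of x 2]]
    by (simp add: fa_diff_eq_minus fa_grade_scale_diff fa_grade_scale_smul fa_grade_scale_gen
        gpr_grade_scale)
qed (simp_all add: fa_grade_scale_ug_ideal verma_ideal.intros fa_add_eq_plus fa_grade_scale_add
    fa_grade_scale_smul fa_grade_scale_mul fa_grade_scale_fin fa.subspace_add[OF verma_ideal_subspace])

definition negative_graded :: "(int \<times> 'g) list \<Rightarrow> bool" where
  "negative_graded ds \<longleftrightarrow> (\<forall>(d, y)\<in>set ds. d < 0 \<and> y \<in> G d)"

lemma negative_graded_Nil [simp]: "negative_graded []"
  and negative_graded_Cons [simp]: "negative_graded ((d, y) # ds) \<longleftrightarrow> d < 0 \<and> y \<in> G d \<and> negative_graded ds"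
  by (simp_all add: negative_graded_def)

lemma negative_graded_degree: "negative_graded ds \<Longrightarrow> sum_list (map fst ds) \<le> 0"
  by (induction ds) (auto simp: negative_graded_def)

lemma negative_graded_word_un_minus_deg:
  "negative_graded ds \<Longrightarrow> sum_list (map fst ds) = - int n \<Longrightarrow> fa_word (map snd ds) \<in> un_minus_deg G n"
  unfolding negative_graded_def by (rule und_mono)

lemma fa_grade_scale_negative_graded_word:
  assumes "negative_graded ds"
  shows "fa_grade_scale (fa_word (map snd ds)) - fa_smul (2 powi sum_list (map fst ds)) (fa_word (map snd ds))
    \<in> ug_ideal sg br"
  using assms
proof (induction ds)
  case Nil
  then show ?case
    by (simp add: fa_grade_scale_word)
next
  case (Cons p ds)
  obtain d y where p: "p = (d, y)"
    by (cases p)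
  define r where "r = fa_word (map snd ds)"
  define c where "c = (2::complex) powi d"
  define C where "C = (2::complex) powi sum_list (map fst ds)"
  have y: "y \<in> G d" and IH: "fa_grade_scale r - fa_smul C r \<in> ug_ideal sg br"
    using Cons p by (auto simp: r_def C_def)
  have "grade_scale 2 y = sg c y"
    by (simp add: grade_scale_homogeneous[OF y] c_def)
  then have "fa_grade_scale (fa_word (map snd (p # ds))) - fa_smul (c * C) (fa_word (map snd (p # ds)))
     = fa_mul (fa_gen (sg c y) - fa_smul c (fa_gen y)) (fa_grade_scale r)
       + fa_smul c (fa_mul (fa_gen y) (fa_grade_scale r - fa_smul C r))"
    by (simp add: p r_def fa_word_Cons fa_grade_scale_mul fa_grade_scale_gen fa_mul_diff_left
        fa_mul_diff_right fa_mul_smul_left fa_mul_smul_right fa.scale_right_diff_distrib mult.commute)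
  also have "\<dots> \<in> ug_ideal sg br"
    using ug_ideal_gen_scale IH
    by (intro fa.subspace_add[OF ug_ideal_subspace] fa.subspace_scale[OF ug_ideal_subspace]
        ug_rmul ug_lmul) (simp_all add: r_def fa_grade_scale_fin)
  finally show ?case
    by (simp add: p c_def C_def power_int_add)
qed

lemma fa_grade_scale_un_minus_deg:
  "e \<in> un_minus_deg G n \<Longrightarrow> fa_grade_scale e - fa_smul (2 powi - int n) e \<in> ug_ideal sg br"
proof (induction rule: un_minus_deg.induct)
  case (und_mono ds)
  then show ?case
    using fa_grade_scale_negative_graded_word[of ds] by (simp add: negative_graded_def)
next
  case (und_add a b)
  then show ?case
    using fa.subspace_add[OF ug_ideal_subspace und_add.IH]
    by (simp add: fa_add_eq_plus fa_grade_scale_add fa.scale_right_distrib algebra_simps)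
next
  case (und_smul a c)
  then show ?case
    using fa.subspace_scale[OF ug_ideal_subspace und_smul.IH, of c]
    by (simp add: fa_grade_scale_smul fa.scale_right_diff_distrib fa.scale_scale mult.commute)
qed (simp add: fa_zero_eq_zero fa.subspace_0[OF ug_ideal_subspace])

text \<open>Modulo the defining ideal of \<open>U g\<close>, \<open>annihilate_degree n\<close> kills \<open>(U n\<^sub>-)\<^sub>-\<^sub>n\<close> and multiplies
  \<open>1\<close> by \<open>1 - 2 powi -n\<close>, which is nonzero for \<open>n > 0\<close>.\<close>

definition annihilate_degree :: "nat \<Rightarrow> 'g fa \<Rightarrow> 'g fa" where
  "annihilate_degree n a = fa_grade_scale a - fa_smul (2 powi - int n) a"

lemma annihilate_degree_add: "annihilate_degree n (a + b) = annihilate_degree n a + annihilate_degree n b"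
  and annihilate_degree_diff: "annihilate_degree n (a - b) = annihilate_degree n a - annihilate_degree n b"
  and annihilate_degree_smul: "annihilate_degree n (fa_smul c a) = fa_smul c (annihilate_degree n a)"
  by (simp_all add: annihilate_degree_def fa_grade_scale_add fa_grade_scale_diff fa_grade_scale_smul
      fa.scale_right_distrib fa.scale_right_diff_distrib fa.scale_scale mult.commute)

lemma annihilate_degree_commute:
  "annihilate_degree n (annihilate_degree k a) = annihilate_degree k (annihilate_degree n a)"
  by (simp add: annihilate_degree_def fa_grade_scale_def fa_smul_def fun_eq_iff fun_apply_simps algebra_simps)

lemma annihilate_degree_one:
  "annihilate_degree n (fa_smul c fa_one) = fa_smul (c * (1 - 2 powi - int n)) fa_one"
  by (simp add: annihilate_degree_def fa_grade_scale_smul fa.scale_scale algebra_simps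
      fa.scale_left_diff_distrib)

lemma fold_annihilate_degree_add:
  "fold annihilate_degree ks (a + b) = fold annihilate_degree ks a + fold annihilate_degree ks b"
  and fold_annihilate_degree_diff:
  "fold annihilate_degree ks (a - b) = fold annihilate_degree ks a - fold annihilate_degree ks b"
  by (induction ks arbitrary: a b)
     (simp_all add: annihilate_degree_add annihilate_degree_diff annihilate_degree_smul)

lemma fold_annihilate_degree_commute:
  "fold annihilate_degree ks (fold annihilate_degree ls a) =
    fold annihilate_degree ls (fold annihilate_degree ks a)"
proof -
  have "annihilate_degree n (fold annihilate_degree ls a) = fold annihilate_degree ls (annihilate_degree n a)"
    for n a
    by (induction ls arbitrary: a) (simp_all add: annihilate_degree_commute)
  then show ?thesis
    by (induction ks arbitrary: a) simp_all
qed

lemma fold_annihilate_degree_one: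
  "fold annihilate_degree ks fa_one = fa_smul (\<Prod>k\<leftarrow>ks. 1 - 2 powi - int k) fa_one"
proof -
  have "fold annihilate_degree ks (fa_smul c fa_one) =
      fa_smul (c * (\<Prod>k\<leftarrow>ks. 1 - 2 powi - int k)) fa_one" for c
    by (induction ks arbitrary: c) (simp_all add: annihilate_degree_one mult.assoc)
  from this[of 1] show ?thesis
    by simp
qed

lemma one_minus_two_powi_neq_zero: "0 < k \<Longrightarrow> (1::complex) - 2 powi - int k \<noteq> 0"
proof
  assume "0 < k" "(1::complex) - 2 powi - int k = 0"
  then have "(2::complex) ^ k = 1"
    by (simp add: power_int_minus field_simps)
  then have "(2::nat) ^ k = 1"
    by (metis of_nat_eq_1_iff of_nat_numeral of_nat_power)
  with \<open>0 < k\<close> show False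
    by simp
qed

end

locale verma_module = graded_lie sg br G
  for sg :: "complex \<Rightarrow> 'g \<Rightarrow> 'g::ab_group_add"
    and br :: "'g \<Rightarrow> 'g \<Rightarrow> 'g"
    and G :: "int \<Rightarrow> 'g set" +
  fixes chi :: "'g \<Rightarrow> complex" and lam :: complex
  assumes chi_zero: "chi 0 = 0"
begin

abbreviation J where "J \<equiv> verma_ideal sg br G chi lam"

abbreviation Un_minus where "Un_minus n \<equiv> un_minus_deg G n"

text \<open>Representatives of \<open>(M\<^sup>+\<^sub>\<lambda>)\<^sub>-\<^sub>k\<close> for an integer \<open>k\<close>; this component is zero for \<open>k < 0\<close>.\<close>

definition verma_part :: "int \<Rightarrow> 'g fa set" where
  "verma_part k = {m. fa_fin m \<and> (\<exists>e. m - e \<in> J \<and> (if 0 \<le> k then e \<in> Un_minus (nat k) else e = 0))}"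

lemma verma_part_nat: "verma_part (int n) = verma_comp sg br G chi lam n"
  by (auto simp: verma_part_def verma_comp_def fa_diff_eq_minus)

lemma verma_part_negative: "k < 0 \<Longrightarrow> verma_part k = J"
  by (auto simp: verma_part_def verma_ideal_fin)

lemma verma_ideal_subset_verma_part: "J \<subseteq> verma_part k"
proof
  fix m assume "m \<in> J"
  then show "m \<in> verma_part k"
    unfolding verma_part_def using verma_ideal_fin fa.subspace_0[OF un_minus_deg_subspace]
    by (intro CollectI conjI exI[of _ 0]) auto
qed

lemma un_minus_deg_subset_verma_part: "Un_minus n \<subseteq> verma_part (int n)"
proof
  fix e assume "e \<in> Un_minus n"
  then show "e \<in> verma_part (int n)"
    unfolding verma_part_def using un_minus_deg_fin fa.subspace_0[OF verma_ideal_subspace]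
    by (intro CollectI conjI exI[of _ e]) auto
qed

lemma ug_ideal_subset_verma_part: "ug_ideal sg br \<subseteq> verma_part k"
  using verma_ideal_subset_verma_part vi_ug by blast

lemma verma_part_subspace: "fa.subspace (verma_part k)"
proof -
  have "m1 + m2 \<in> verma_part k" if m: "m1 \<in> verma_part k" "m2 \<in> verma_part k" for m1 m2
  proof -
    obtain e1 e2 where e: "m1 - e1 \<in> J" "m2 - e2 \<in> J"
      and c: "if 0 \<le> k then e1 \<in> Un_minus (nat k) else e1 = 0"
        "if 0 \<le> k then e2 \<in> Un_minus (nat k) else e2 = 0"
      using m unfolding verma_part_def mem_Collect_eq by blast
    have "(m1 + m2) - (e1 + e2) \<in> J"
      using fa.subspace_add[OF verma_ideal_subspace e] by (simp add: algebra_simps)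
    moreover have "if 0 \<le> k then e1 + e2 \<in> Un_minus (nat k) else e1 + e2 = 0"
      using c fa.subspace_add[OF un_minus_deg_subspace] by auto
    ultimately show ?thesis
      using m unfolding verma_part_def by auto
  qed
  moreover have "fa_smul c m \<in> verma_part k" if m: "m \<in> verma_part k" for c m
  proof -
    obtain e where e: "m - e \<in> J" and c: "if 0 \<le> k then e \<in> Un_minus (nat k) else e = 0"
      using m unfolding verma_part_def mem_Collect_eq by blast
    have "fa_smul c m - fa_smul c e \<in> J"
      using fa.subspace_scale[OF verma_ideal_subspace e] by (simp add: fa.scale_right_diff_distrib)
    moreover have "if 0 \<le> k then fa_smul c e \<in> Un_minus (nat k) else fa_smul c e = 0"
      using c fa.subspace_scale[OF un_minus_deg_subspace] by auto
    ultimately show ?thesis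
      using m unfolding verma_part_def by auto
  qed
  ultimately show ?thesis
    using verma_ideal_subset_verma_part[of k] fa.subspace_0[OF verma_ideal_subspace]
    unfolding fa.subspace_def by blast
qed

lemma negative_graded_word_verma_part:
  "negative_graded ds \<Longrightarrow> fa_word (map snd ds) \<in> verma_part (- sum_list (map fst ds))"
  using negative_graded_word_un_minus_deg[of ds] un_minus_deg_subset_verma_part negative_graded_degree
  by (metis (no_types, lifting) add.inverse_inverse neg_0_le_iff_le nonneg_int_cases subsetD)

lemma un_minus_deg_gen_mul:
  assumes "e \<in> Un_minus n" "d < 0" "y \<in> G d"
  shows "fa_mul (fa_gen y) e \<in> Un_minus (n + nat (- d))"
  using assms(1)
proof (induction rule: un_minus_deg.induct)
  case (und_mono ds)
  then show ?case
    using negative_graded_word_un_minus_deg[of "(d, y) # ds" "n + nat (- d)"] assms(2,3)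
    by (simp add: negative_graded_def fa_word_Cons)
qed (simp_all add: fa_zero_eq_zero fa_add_eq_plus fa_mul_add_right fa_mul_smul_right
    un_minus_deg.intros fa.subspace_0[OF un_minus_deg_subspace] fa.subspace_add[OF un_minus_deg_subspace])

lemma negative_gen_mul_verma_part:
  assumes m: "m \<in> verma_part k" and "d < 0" "y \<in> G d"
  shows "fa_mul (fa_gen y) m \<in> verma_part (k - d)"
proof -
  obtain e where e: "m - e \<in> J" and c: "if 0 \<le> k then e \<in> Un_minus (nat k) else e = 0"
    using m unfolding verma_part_def mem_Collect_eq by blast
  have "fa_mul (fa_gen y) m - fa_mul (fa_gen y) e \<in> J"
    using vi_lmul[OF e fa_fin_gen] by (simp add: fa_mul_diff_right)
  moreover have "if 0 \<le> k - d then fa_mul (fa_gen y) e \<in> Un_minus (nat (k - d))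
      else fa_mul (fa_gen y) e = 0"
  proof (cases "0 \<le> k")
    case True
    then have "nat k + nat (- d) = nat (k - d)"
      using assms(2) by simp
    then show ?thesis
      using True c un_minus_deg_gen_mul[of e "nat k", OF _ assms(2,3)] assms(2) by simp
  qed (use c in simp)
  ultimately show ?thesis
    using m unfolding verma_part_def by auto
qed

text \<open>\<open>x \<cdot> v\<^sub>\<lambda> = \<lambda> \<chi>(x\<^sub>0) v\<^sub>\<lambda>\<close> for \<open>x \<in> p\<^sub>+\<close>, which vanishes in positive degree.\<close>

lemma pplus_gen_verma_part:
  assumes x: "x \<in> G i" and "0 \<le> i"
  shows "fa_gen x \<in> verma_part (- i)"
proof -
  define c where "c = lam * chi (gpr G 0 x)"
  have "fa_smul c fa_one \<in> verma_part (- i)"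
  proof (cases "i = 0")
    case True
    then show ?thesis
      using negative_graded_word_verma_part[of "[]"]
        fa.subspace_scale[OF verma_part_subspace] by (simp add: fa_one_def)
  next
    case False
    then have "c = 0"
      using gpr_homogeneous[OF x, of 0] by (simp add: c_def chi_zero)
    then show ?thesis
      using fa.subspace_0[OF verma_part_subspace] by simp
  qed
  moreover have "fa_gen x - fa_smul c fa_one \<in> verma_part (- i)"
    using subsetD[OF verma_ideal_subset_verma_part verma_ideal_pplus[OF pplus_homogeneous[OF assms]]]
    by (simp add: c_def)
  ultimately have "fa_smul c fa_one + (fa_gen x - fa_smul c fa_one) \<in> verma_part (- i)"
    by (rule fa.subspace_add[OF verma_part_subspace])
  then show ?thesis
    by simp
qed

lemma pplus_gen_mul_negative_graded_word:
  assumes "x \<in> G i" "0 \<le> i" "negative_graded ds"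
  shows "fa_mul (fa_gen x) (fa_word (map snd ds)) \<in> verma_part (- sum_list (map fst ds) - i)"
  using assms
proof (induction ds arbitrary: x i)
  case Nil
  then show ?case
    using pplus_gen_verma_part by (simp flip: fa_one_def)
next
  case (Cons p ds)
  obtain d y where p: "p = (d, y)"
    by (cases p)
  have d: "d < 0" and y: "y \<in> G d" and ds: "negative_graded ds"
    using Cons.prems p by auto
  define K where "K = - sum_list (map fst ds)"
  define r where "r = fa_word (map snd ds)"
  have r_fin: "fa_fin r"
    by (simp add: r_def)
  have goal_degree: "- sum_list (map fst (p # ds)) - i = K - i - d"
    by (simp add: p K_def)
  have "fa_mul (fa_gen y) (fa_mul (fa_gen x) r) \<in> verma_part (K - i - d)"
    using negative_gen_mul_verma_part[OF Cons.IH[OF Cons.prems(1,2) ds] d y] by (simp add: K_def r_def)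
  moreover have "fa_mul (fa_gen (br x y)) r \<in> verma_part (K - i - d)"
  proof (cases "0 \<le> i + d")
    case True
    then show ?thesis
      using Cons.IH[OF G_br[OF Cons.prems(1) y] True ds] by (simp add: K_def r_def algebra_simps)
  next
    case False
    then show ?thesis
      using negative_gen_mul_verma_part[OF negative_graded_word_verma_part[OF ds]
          False[unfolded not_le] G_br[OF Cons.prems(1) y]]
      by (simp add: K_def r_def algebra_simps)
  qed
  ultimately have "fa_mul (fa_gen x) (fa_mul (fa_gen y) r) \<in> verma_part (K - i - d)"
    by (rule subspace_gen_mul_commute[OF verma_part_subspace ug_ideal_subset_verma_part r_fin])
  then show ?case
    unfolding goal_degree by (simp add: p r_def fa_word_Cons)
qed

lemma pplus_gen_mul_un_minus_deg:
  assumes "x \<in> G i" "0 \<le> i" "e \<in> Un_minus n"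
  shows "fa_mul (fa_gen x) e \<in> verma_part (int n - i)"
  using assms(3)
proof (induction rule: un_minus_deg.induct)
  case (und_mono ds)
  then show ?case
    using pplus_gen_mul_negative_graded_word[OF assms(1,2), of ds] by (simp add: negative_graded_def)
qed (simp_all add: fa_zero_eq_zero fa_add_eq_plus fa_mul_add_right fa_mul_smul_right
    fa.subspace_0[OF verma_part_subspace] fa.subspace_add[OF verma_part_subspace]
    fa.subspace_scale[OF verma_part_subspace])

lemma gen_mul_verma_part:
  assumes x: "x \<in> G i" and m: "m \<in> verma_part k"
  shows "fa_mul (fa_gen x) m \<in> verma_part (k - i)"
proof (cases "i < 0")
  case True
  then show ?thesis
    using negative_gen_mul_verma_part[OF m True x] by simp
next
  case False
  obtain e where e: "m - e \<in> J" and c: "if 0 \<le> k then e \<in> Un_minus (nat k) else e = 0"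
    using m unfolding verma_part_def mem_Collect_eq by blast
  have "fa_mul (fa_gen x) (m - e) \<in> verma_part (k - i)"
    using vi_lmul[OF e fa_fin_gen] verma_ideal_subset_verma_part by blast
  moreover have "fa_mul (fa_gen x) e \<in> verma_part (k - i)"
    using c pplus_gen_mul_un_minus_deg[OF x, of e "nat k"] False fa.subspace_0[OF verma_part_subspace]
    by (auto split: if_splits)
  ultimately show ?thesis
    using fa.subspace_add[OF verma_part_subspace] by (fastforce simp: fa_mul_diff_right)
qed

lemma negative_graded_word_mul_verma_part:
  "negative_graded ys \<Longrightarrow> m \<in> verma_part k \<Longrightarrow>
    fa_mul (fa_word (map snd ys)) m \<in> verma_part (k - sum_list (map fst ys))"
proof (induction ys arbitrary: k)
  case (Cons p ys)
  obtain d y where p: "p = (d, y)"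
    by (cases p)
  then show ?case
    using negative_gen_mul_verma_part[OF Cons.IH, of k d y] Cons.prems
    by (simp add: fa_word_Cons fa_mul_assoc algebra_simps)
qed (simp flip: fa_one_def)

lemma annihilate_degree_verma_ideal: "a \<in> J \<Longrightarrow> annihilate_degree n a \<in> J"
  unfolding annihilate_degree_def
  by (intro fa.subspace_diff[OF verma_ideal_subspace] fa_grade_scale_verma_ideal vi_smul)

lemma fold_annihilate_degree_verma_ideal: "a \<in> J \<Longrightarrow> fold annihilate_degree ks a \<in> J"
  by (induction ks arbitrary: a) (simp_all add: annihilate_degree_verma_ideal)

lemma fold_annihilate_degree_append_verma_ideal:
  assumes "fold annihilate_degree ks a \<in> J" "fold annihilate_degree ls b \<in> J"
  shows "fold annihilate_degree (ks @ ls) (a + b) \<in> J"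
proof -
  have "fold annihilate_degree (ks @ ls) (a + b) =
      fold annihilate_degree ls (fold annihilate_degree ks a)
      + fold annihilate_degree ks (fold annihilate_degree ls b)"
    by (simp add: fold_annihilate_degree_add fold_annihilate_degree_commute[of ls ks])
  then show ?thesis
    using assms by (simp add: fa.subspace_add[OF verma_ideal_subspace] fold_annihilate_degree_verma_ideal)
qed

lemma annihilate_degree_verma_part:
  assumes "m \<in> verma_part (int n)"
  shows "annihilate_degree n m \<in> J"
proof -
  obtain e where e: "m - e \<in> J" "e \<in> Un_minus n"
    using assms unfolding verma_part_def by auto
  have "annihilate_degree n m = annihilate_degree n (m - e) + annihilate_degree n e"
    by (simp add: annihilate_degree_diff)
  moreover have "annihilate_degree n e \<in> J"
    using vi_ug[OF fa_grade_scale_un_minus_deg[OF e(2)]] by (simp add: annihilate_degree_def)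
  ultimately show ?thesis
    using fa.subspace_add[OF verma_ideal_subspace annihilate_degree_verma_ideal[OF e(1)]] by simp
qed

end

section \<open>Singular vectors of negative degree vanish\<close>

context verma_module
begin

definition singular_part :: "nat \<Rightarrow> 'g fa set" where
  "singular_part n = {w \<in> verma_part (int n). \<forall>i x. 0 < i \<longrightarrow> x \<in> G i \<longrightarrow> fa_mul (fa_gen x) w \<in> J}"

text \<open>Modulo \<open>J\<close>, \<open>singular_span n\<close> is the submodule generated by the singular vectors of degree \<open>-n\<close>
  and it lies in degrees \<open>\<le> -n\<close>.\<close>

definition singular_span :: "nat \<Rightarrow> 'g fa set" where
  "singular_span n = fa.span {fa_mul (fa_word (map snd ys)) w | ys w. negative_graded ys \<and> w \<in> singular_part n}"

definition singular_submodule :: "nat \<Rightarrow> 'g fa set" where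
  "singular_submodule n = {a. fa_fin a \<and> (\<exists>t\<in>singular_span n. a - t \<in> J)}"

lemma zero_singular_span [simp]: "0 \<in> singular_span n"
  by (simp add: singular_span_def fa.span_zero)

lemma singular_part_fin: "w \<in> singular_part n \<Longrightarrow> fa_fin w"
  by (simp add: singular_part_def verma_part_def)

lemma singular_part_subset_singular_span: "singular_part n \<subseteq> singular_span n"
  unfolding singular_span_def
  by (force intro: fa.span_base exI[of _ "[]"] simp flip: fa_one_def)

lemma singular_span_fin: "t \<in> singular_span n \<Longrightarrow> fa_fin t"
proof -
  have "{fa_mul (fa_word (map snd ys)) w | ys w. negative_graded ys \<and> w \<in> singular_part n}
      \<subseteq> {a. fa_fin a}"
    by (auto dest: singular_part_fin)
  then have "singular_span n \<subseteq> {a. fa_fin a}"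
    unfolding singular_span_def by (rule fa.span_minimal[OF _ fa_fin_subspace])
  then show "t \<in> singular_span n \<Longrightarrow> fa_fin t"
    by blast
qed

lemma singular_submodule_subspace: "fa.subspace (singular_submodule n)"
proof -
  have "a + b \<in> singular_submodule n" if ab: "a \<in> singular_submodule n" "b \<in> singular_submodule n" for a b
  proof -
    obtain s t where st: "s \<in> singular_span n" "t \<in> singular_span n" and "a - s \<in> J" "b - t \<in> J"
      using ab unfolding singular_submodule_def by blast
    then have "(a + b) - (s + t) \<in> J"
      using fa.subspace_add[OF verma_ideal_subspace] by (metis add_diff_add)
    then show ?thesis
      using ab fa.span_add[OF st[unfolded singular_span_def]]
      unfolding singular_submodule_def singular_span_def by auto
  qed
  moreover have "fa_smul c a \<in> singular_submodule n" if a: "a \<in> singular_submodule n" for c a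
  proof -
    obtain s where s: "s \<in> singular_span n" and "a - s \<in> J"
      using a unfolding singular_submodule_def by blast
    then have "fa_smul c a - fa_smul c s \<in> J"
      using vi_smul[of "a - s"] by (simp add: fa.scale_right_diff_distrib)
    then show ?thesis
      using a fa.span_scale[OF s[unfolded singular_span_def]]
      unfolding singular_submodule_def singular_span_def by auto
  qed
  ultimately show ?thesis
    unfolding fa.subspace_def singular_submodule_def by (auto intro!: bexI[of _ 0])
qed

lemma verma_ideal_subset_singular_submodule: "J \<subseteq> singular_submodule n"
  unfolding singular_submodule_def by (auto intro!: bexI[of _ 0] fa.span_zero verma_ideal_fin)

lemma singular_span_subset_singular_submodule: "singular_span n \<subseteq> singular_submodule n"
  unfolding singular_submodule_def by (auto intro!: bexI simp: singular_span_fin)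

lemma singular_part_G0_mul:
  assumes w: "w \<in> singular_part n" and x: "x \<in> G 0"
  shows "fa_mul (fa_gen x) w \<in> singular_part n"
proof -
  have "fa_mul (fa_gen x') (fa_mul (fa_gen x) w) \<in> J" if "0 < i" "x' \<in> G i" for i x'
  proof -
    have x'w: "fa_mul (fa_gen x') w \<in> J" and br: "fa_mul (fa_gen (br x' x)) w \<in> J"
      using w that G_br[OF that(2) x] by (auto simp: singular_part_def)
    show ?thesis
      using vi_lmul[OF x'w fa_fin_gen[of x]]
      using subspace_gen_mul_commute[OF verma_ideal_subspace ug_ideal_subset_verma_ideal
          singular_part_fin[OF w] _ br] by blast
  qed
  moreover have "fa_mul (fa_gen x) w \<in> verma_part (int n)"
    using gen_mul_verma_part[OF x, of w "int n"] w by (simp add: singular_part_def)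
  ultimately show ?thesis
    unfolding singular_part_def by blast
qed

lemma singular_span_negative_mul:
  assumes "t \<in> singular_span n" "d < 0" "y \<in> G d"
  shows "fa_mul (fa_gen y) t \<in> singular_span n"
  using assms(1) unfolding singular_span_def
proof (induction rule: fa.span_induct_alt)
  case (step c g t)
  then obtain ys w where "g = fa_mul (fa_word (map snd ys)) w" "negative_graded ys" "w \<in> singular_part n"
    by blast
  then have "fa_mul (fa_gen y) g
      \<in> {fa_mul (fa_word (map snd ys)) w | ys w. negative_graded ys \<and> w \<in> singular_part n}"
    using assms(2,3) by (auto intro!: exI[of _ "(d, y) # ys"] simp: fa_word_Cons fa_mul_assoc)
  then show ?case
    using step.IH
    by (simp add: fa_mul_add_right fa_mul_smul_right fa.span_add fa.span_scale fa.span_base)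
qed (simp add: fa.span_zero)

lemma singular_submodule_negative_mul:
  assumes "a \<in> singular_submodule n" "d < 0" "y \<in> G d"
  shows "fa_mul (fa_gen y) a \<in> singular_submodule n"
proof -
  obtain t where t: "t \<in> singular_span n" and "a - t \<in> J" "fa_fin a"
    using assms(1) unfolding singular_submodule_def by blast
  then have "fa_mul (fa_gen y) a - fa_mul (fa_gen y) t \<in> J"
    using vi_lmul[of "a - t" sg br G chi lam "fa_gen y"] by (simp add: fa_mul_diff_right)
  then show ?thesis
    using singular_span_negative_mul[OF t assms(2,3)] \<open>fa_fin a\<close>
    unfolding singular_submodule_def by auto
qed

lemma gen_mul_singular_part:
  assumes x: "x \<in> G i" and w: "w \<in> singular_part n"
  shows "fa_mul (fa_gen x) w \<in> singular_submodule n"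
proof -
  consider "i < 0" | "i = 0" | "0 < i"
    by linarith
  then show ?thesis
  proof cases
    case 1
    have "fa_mul (fa_word (map snd [(i, x)])) w \<in> singular_span n"
      unfolding singular_span_def
      by (rule fa.span_base) (use x w 1 in \<open>auto intro!: exI[of _ "[(i, x)]"]\<close>)
    then show ?thesis
      using singular_span_subset_singular_submodule by (auto simp: fa_gen_def)
  next
    case 2
    then show ?thesis
      using singular_part_G0_mul[OF w] x singular_part_subset_singular_span
        singular_span_subset_singular_submodule by blast
  next
    case 3
    then show ?thesis
      using x w verma_ideal_subset_singular_submodule by (auto simp: singular_part_def)
  qed
qed

lemma gen_mul_singular_word:
  assumes "x \<in> G i" "negative_graded ys" "w \<in> singular_part n"
  shows "fa_mul (fa_gen x) (fa_mul (fa_word (map snd ys)) w) \<in> singular_submodule n"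
  using assms(1,2)
proof (induction ys arbitrary: x i)
  case Nil
  then show ?case
    using gen_mul_singular_part[OF _ assms(3)] by (simp flip: fa_one_def)
next
  case (Cons p ys)
  obtain d y where p: "p = (d, y)"
    by (cases p)
  have d: "d < 0" and y: "y \<in> G d" and ys: "negative_graded ys"
    using Cons.prems p by auto
  define r where "r = fa_mul (fa_word (map snd ys)) w"
  have ug: "ug_ideal sg br \<subseteq> singular_submodule n"
    using ug_ideal_subset_verma_ideal verma_ideal_subset_singular_submodule by blast
  have r_fin: "fa_fin r"
    using singular_part_fin[OF assms(3)] by (simp add: r_def)
  have "fa_mul (fa_gen x) (fa_mul (fa_gen y) r) \<in> singular_submodule n"
    by (rule subspace_gen_mul_commute[OF singular_submodule_subspace ug r_fin
        singular_submodule_negative_mul[OF Cons.IH[OF Cons.prems(1) ys] d y, folded r_def]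
        Cons.IH[OF G_br[OF Cons.prems(1) y] ys, folded r_def]])
  then show ?case
    by (simp add: p r_def fa_word_Cons fa_mul_assoc)
qed

lemma gen_mul_singular_span:
  assumes "t \<in> singular_span n"
  shows "fa_mul (fa_gen x) t \<in> singular_submodule n"
proof -
  define S where "S = {i. gpr G i x \<noteq> 0}"
  have generator: "fa_mul (fa_gen x) (fa_mul (fa_word (map snd ys)) w) \<in> singular_submodule n"
    if ys: "negative_graded ys" and w: "w \<in> singular_part n" for ys w
  proof -
    define g where "g = fa_mul (fa_word (map snd ys)) w"
    have "fa_gen x - (\<Sum>i\<in>S. fa_gen (gpr G i x)) \<in> ug_ideal sg br"
      using ug_ideal_gen_sum[of S "\<lambda>i. gpr G i x"] sum_gpr[of x] by (simp add: S_def)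
    then have "fa_mul (fa_gen x - (\<Sum>i\<in>S. fa_gen (gpr G i x))) g \<in> J"
      by (intro vi_ug ug_rmul) (simp_all add: g_def singular_part_fin[OF w])
    then have "fa_mul (fa_gen x - (\<Sum>i\<in>S. fa_gen (gpr G i x))) g
        + (\<Sum>i\<in>S. fa_mul (fa_gen (gpr G i x)) g) \<in> singular_submodule n"
      using verma_ideal_subset_singular_submodule gen_mul_singular_word[OF gpr_in_G ys w]
      by (intro fa.subspace_add[OF singular_submodule_subspace]
          fa.subspace_sum[OF singular_submodule_subspace])
         (auto simp: g_def)
    then show ?thesis
      by (simp add: g_def fa_mul_diff_left fa_mul_sum_left)
  qed
  show ?thesis
    using assms unfolding singular_span_def
  proof (induction rule: fa.span_induct_alt)
    case (step c g t)
    then show ?case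
      using generator
      by (auto simp: fa_mul_add_right fa_mul_smul_right
          intro!: fa.subspace_add[OF singular_submodule_subspace]
          fa.subspace_scale[OF singular_submodule_subspace])
  qed (simp add: fa.subspace_0[OF singular_submodule_subspace])
qed

lemma gen_mul_singular_submodule:
  assumes "a \<in> singular_submodule n"
  shows "fa_mul (fa_gen x) a \<in> singular_submodule n"
proof -
  obtain t where t: "t \<in> singular_span n" and at: "a - t \<in> J"
    using assms unfolding singular_submodule_def by blast
  have "fa_mul (fa_gen x) (a - t) \<in> singular_submodule n"
    using vi_lmul[OF at fa_fin_gen] verma_ideal_subset_singular_submodule by blast
  then have "fa_mul (fa_gen x) (a - t) + fa_mul (fa_gen x) t \<in> singular_submodule n"
    using gen_mul_singular_span[OF t] by (rule fa.subspace_add[OF singular_submodule_subspace])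
  then show ?thesis
    by (simp add: fa_mul_diff_right)
qed

lemma singular_submodule_cases:
  assumes "verma_irreducible sg br G chi lam"
  shows "singular_submodule n = J \<or> singular_submodule n = {a. fa_fin a}"
  using singular_submodule_subspace verma_ideal_subset_singular_submodule gen_mul_singular_submodule
  by (intro verma_irreducible_cases[OF assms]) (auto simp: singular_submodule_def)

lemma singular_span_annihilated:
  assumes "0 < n" "t \<in> singular_span n"
  shows "\<exists>ks. (\<forall>k\<in>set ks. 0 < k) \<and> fold annihilate_degree ks t \<in> J"
  using assms(2) unfolding singular_span_def
proof (induction rule: fa.span_induct_alt)
  case base
  show ?case
    by (intro exI[of _ "[]"]) simp
next
  case (step c g t)
  obtain ys w where g: "g = fa_mul (fa_word (map snd ys)) w" and ys: "negative_graded ys"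
    and w: "w \<in> singular_part n"
    using step.hyps by blast
  define r where "r = nat (- sum_list (map fst ys))"
  have "g \<in> verma_part (int (n + r))"
    using negative_graded_word_mul_verma_part[OF ys, of w "int n"] w negative_graded_degree[OF ys]
    by (simp add: g r_def singular_part_def)
  then have "fold annihilate_degree [n + r] (fa_smul c g) \<in> J"
    using vi_smul[OF annihilate_degree_verma_part] by (simp add: annihilate_degree_smul)
  moreover obtain ks where ks: "\<forall>k\<in>set ks. 0 < k" "fold annihilate_degree ks t \<in> J"
    using step.IH by blast
  ultimately have "fold annihilate_degree ([n + r] @ ks) (fa_smul c g + t) \<in> J"
    by (intro fold_annihilate_degree_append_verma_ideal)
  moreover have "\<forall>k\<in>set ([n + r] @ ks). 0 < k"
    using ks(1) assms(1) by auto
  ultimately show ?case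
    by blast
qed

theorem singular_vector_in_verma_ideal:
  assumes irreducible: "verma_irreducible sg br G chi lam" and "0 < n" and w: "w \<in> singular_part n"
  shows "w \<in> J"
proof -
  have "w \<in> singular_submodule n"
    using w singular_part_subset_singular_span singular_span_subset_singular_submodule by blast
  moreover have "fa_one \<notin> singular_submodule n"
  proof
    assume "fa_one \<in> singular_submodule n"
    then obtain t where t: "t \<in> singular_span n" "fa_one - t \<in> J"
      unfolding singular_submodule_def by blast
    obtain ks where ks: "\<forall>k\<in>set ks. 0 < k" "fold annihilate_degree ks t \<in> J"
      using singular_span_annihilated[OF \<open>0 < n\<close> t(1)] by blast
    define c where "c = (\<Prod>k\<leftarrow>ks. (1::complex) - 2 powi - int k)"
    have "fold annihilate_degree ks (fa_one - t) + fold annihilate_degree ks t \<in> J"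
      using fold_annihilate_degree_verma_ideal[OF t(2)] ks(2)
      by (rule fa.subspace_add[OF verma_ideal_subspace])
    then have "fa_smul c fa_one \<in> J"
      by (simp add: fold_annihilate_degree_diff fold_annihilate_degree_one c_def)
    moreover have "c \<noteq> 0"
      using ks(1) one_minus_two_powi_neq_zero by (auto simp: c_def prod_list_zero_iff)
    ultimately have "fa_one \<in> J"
      using vi_smul[of "fa_smul c fa_one" sg br G chi lam "inverse c"] by (simp add: fa.scale_scale)
    then show False
      using irreducible unfolding verma_irreducible_def by blast
  qed
  ultimately show ?thesis
    using singular_submodule_cases[OF irreducible, of n] by auto
qed

end

section \<open>Invariant elements of the completed tensor product\<close>

definition apply_left ::
  "(complex \<Rightarrow> 'v \<Rightarrow> 'v::ab_group_add) \<Rightarrow> ('g fa \<Rightarrow> complex) \<Rightarrow> ('g fa \<times> 'v) list \<Rightarrow> 'v" where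
  "apply_left sv f ts = sum_list (map (\<lambda>(m, v). sv (f m) v) ts)"

definition apply_right :: "('v \<Rightarrow> complex) \<Rightarrow> ('g fa \<times> 'v) list \<Rightarrow> 'g fa" where
  "apply_right psi ts = sum_list (map (\<lambda>(m, v). fa_smul (psi v) m) ts)"

definition linear_functional :: "(complex \<Rightarrow> 'v \<Rightarrow> 'v::ab_group_add) \<Rightarrow> ('v \<Rightarrow> complex) \<Rightarrow> bool" where
  "linear_functional sv psi \<longleftrightarrow> (\<forall>u v. psi (u + v) = psi u + psi v) \<and> (\<forall>c v. psi (sv c v) = c * psi v)"

definition ctensor_diff :: "('g, 'v::ab_group_add) ctensor \<Rightarrow> ('g, 'v) ctensor \<Rightarrow> ('g, 'v) ctensor" where
  "ctensor_diff z z' n = z n @ map (\<lambda>(m, v). (m, - v)) (z' n)"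

lemma linear_functionals_separate:
  assumes "vector_space sv" "\<And>psi. linear_functional sv psi \<Longrightarrow> psi s = 0"
  shows "s = 0"
proof -
  interpret V: vector_space sv
    by (rule assms(1))
  obtain B where B: "V.independent B" "UNIV \<subseteq> V.span B"
    using V.basis_exists by blast
  have span: "v \<in> V.span B" for v
    using B(2) by blast
  have "linear_functional sv (\<lambda>v. V.representation B v b)" for b
    unfolding linear_functional_def
    using V.representation_add[OF B(1) span span] V.representation_scale[OF B(1) span] by simp
  then have "V.representation B s b = 0" for b
    by (rule assms(2))
  then have "{b. V.representation B s b \<noteq> 0} = {}"
    by simp
  then show ?thesis
    using V.sum_nonzero_representation_eq[OF B(1) span, of s] by simp
qed

lemma linear_functional_zero: "linear_functional sv psi \<Longrightarrow> psi 0 = 0"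
  unfolding linear_functional_def by (metis add_cancel_right_right add_0)

lemma linear_functional_apply_left:
  "linear_functional sv psi \<Longrightarrow> psi (apply_left sv f ts) = sum_list (map (\<lambda>(m, v). psi v * f m) ts)"
  by (induction ts) (auto simp: apply_left_def linear_functional_zero, simp_all add: linear_functional_def)

lemma apply_left_append: "apply_left sv f (xs @ ys) = apply_left sv f xs + apply_left sv f ys"
  by (simp add: apply_left_def)

lemma apply_left_lmul:
  "apply_left sv f (map (\<lambda>(m, v). (fa_mul p m, v)) ts) = apply_left sv (\<lambda>a. f (fa_mul p a)) ts"
  by (induction ts) (auto simp: apply_left_def)

lemma apply_left_vanishing:
  assumes "vector_space sv" "\<And>m v. (m, v) \<in> set ts \<Longrightarrow> f m = 0"
  shows "apply_left sv f ts = 0"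
proof -
  interpret vector_space sv
    by (rule assms(1))
  show ?thesis
    using assms(2) by (induction ts) (fastforce simp: apply_left_def)+
qed

lemma apply_left_act:
  assumes "lie_module sg br sv act"
  shows "apply_left sv f (map (\<lambda>(m, v). (m, act x v)) ts) = act x (apply_left sv f ts)"
proof -
  interpret additive "act x"
    by standard (use assms in \<open>simp add: lie_module_def\<close>)
  show ?thesis
    using assms by (induction ts) (auto simp: apply_left_def lie_module_def add zero)
qed

lemma apply_left_ctensor_diff:
  assumes "vector_space sv"
  shows "apply_left sv f (ctensor_diff z z' n) = apply_left sv f (z n) - apply_left sv f (z' n)"
proof -
  interpret vector_space sv
    by (rule assms)
  have "apply_left sv f (map (\<lambda>(m, v). (m, - v)) ts) = - apply_left sv f ts" for ts
    by (induction ts) (auto simp: apply_left_def)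
  then show ?thesis
    by (simp add: ctensor_diff_def apply_left_append)
qed

lemma apply_right_fin: "(\<And>m v. (m, v) \<in> set ts \<Longrightarrow> fa_fin m) \<Longrightarrow> fa_fin (apply_right psi ts)"
  by (induction ts) (fastforce simp: apply_right_def)+

lemma fa_mul_apply_right:
  "fa_mul p (apply_right psi ts) = apply_right psi (map (\<lambda>(m, v). (fa_mul p m, v)) ts)"
  by (induction ts) (auto simp: apply_right_def fa_mul_add_right fa_mul_smul_right)

context verma_module
begin

definition verma_functional :: "('g fa \<Rightarrow> complex) \<Rightarrow> bool" where
  "verma_functional f \<longleftrightarrow>
     (\<forall>a b. fa_fin a \<longrightarrow> fa_fin b \<longrightarrow> f (fa_add a b) = f a + f b) \<and>
     (\<forall>c a. fa_fin a \<longrightarrow> f (fa_smul c a) = c * f a) \<and>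
     (\<forall>a\<in>J. f a = 0)"

definition functional_kernel :: "'g fa set" where
  "functional_kernel = {a. fa_fin a \<and> (\<forall>f. verma_functional f \<longrightarrow> f a = 0)}"

lemma tensor_zero_iff:
  "tensor_zero sg br G chi lam sv ts \<longleftrightarrow> (\<forall>f. verma_functional f \<longrightarrow> apply_left sv f ts = 0)"
  by (simp add: tensor_zero_def verma_functional_def apply_left_def)

lemma verma_functional_add: "verma_functional f \<Longrightarrow> fa_fin a \<Longrightarrow> fa_fin b \<Longrightarrow> f (a + b) = f a + f b"
  and verma_functional_smul: "verma_functional f \<Longrightarrow> fa_fin a \<Longrightarrow> f (fa_smul c a) = c * f a"
  and verma_functional_verma_ideal: "verma_functional f \<Longrightarrow> a \<in> J \<Longrightarrow> f a = 0"
  by (simp_all add: verma_functional_def fa_add_eq_plus)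

lemma verma_functional_lmul: "verma_functional f \<Longrightarrow> fa_fin p \<Longrightarrow> verma_functional (\<lambda>a. f (fa_mul p a))"
  unfolding verma_functional_def
  by (auto simp: fa_add_eq_plus fa_mul_add_right fa_mul_smul_right intro: vi_lmul)

lemma functional_kernel_cases:
  assumes "verma_irreducible sg br G chi lam"
  shows "functional_kernel = J \<or> functional_kernel = {a. fa_fin a}"
proof (rule verma_irreducible_cases[OF assms])
  show "fa.subspace functional_kernel"
    unfolding fa.subspace_def functional_kernel_def
    using verma_functional_verma_ideal[OF _ zero_verma_ideal]
    by (auto simp: verma_functional_add verma_functional_smul)
  show "J \<subseteq> functional_kernel"
    by (auto simp: functional_kernel_def verma_ideal_fin verma_functional_verma_ideal)
  show "fa_mul (fa_gen x) a \<in> functional_kernel" if "a \<in> functional_kernel" for x a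
    using that verma_functional_lmul[of _ "fa_gen x"] by (auto simp: functional_kernel_def)
qed (auto simp: functional_kernel_def)

lemma verma_functional_apply_right:
  assumes "verma_functional f" "\<And>m v. (m, v) \<in> set ts \<Longrightarrow> fa_fin m"
  shows "f (apply_right psi ts) = sum_list (map (\<lambda>(m, v). psi v * f m) ts)"
  using assms(2)
proof (induction ts)
  case Nil
  then show ?case
    using verma_functional_verma_ideal[OF assms(1) zero_verma_ideal] by (simp add: apply_right_def)
next
  case (Cons p ts)
  obtain m v where p: "p = (m, v)"
    by (cases p)
  have fin: "fa_fin m" "fa_fin (apply_right psi ts)"
    using Cons.prems by (auto simp: p intro!: apply_right_fin)
  have "apply_right psi (p # ts) = fa_smul (psi v) m + apply_right psi ts"
    by (simp add: p apply_right_def)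
  moreover have "f (apply_right psi ts) = sum_list (map (\<lambda>(m, v). psi v * f m) ts)"
    using Cons by auto
  ultimately show ?case
    using fin by (simp add: p verma_functional_add[OF assms(1)] verma_functional_smul[OF assms(1)])
qed

lemma linear_functional_apply_left_eq:
  assumes "linear_functional sv psi" "verma_functional f" "\<And>m v. (m, v) \<in> set ts \<Longrightarrow> fa_fin m"
  shows "psi (apply_left sv f ts) = f (apply_right psi ts)"
proof -
  have "f (apply_right psi ts) = sum_list (map (\<lambda>(m, v). psi v * f m) ts)"
    using assms(3) by (rule verma_functional_apply_right[OF assms(2)])
  then show ?thesis
    using linear_functional_apply_left[OF assms(1)] by simp
qed

lemma apply_right_verma_part:
  "(\<And>m v. (m, v) \<in> set ts \<Longrightarrow> m \<in> verma_part k) \<Longrightarrow> apply_right psi ts \<in> verma_part k"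
  by (induction ts)
     (auto simp: apply_right_def fa.subspace_0[OF verma_part_subspace]
       intro!: fa.subspace_add[OF verma_part_subspace] fa.subspace_scale[OF verma_part_subspace])

lemma gen_mul_apply_right_eq:
  assumes psi: "linear_functional sv psi" and f: "verma_functional f"
    and fin: "\<And>m v. (m, v) \<in> set ts \<Longrightarrow> fa_fin m"
  shows "f (fa_mul (fa_gen x) (apply_right psi ts)) = psi (apply_left sv (\<lambda>a. f (fa_mul (fa_gen x) a)) ts)"
proof -
  have fin': "fa_fin m'" if "(m', v) \<in> set (map (\<lambda>(m, v). (fa_mul (fa_gen x) m, v)) ts)" for m' v
    using that fin by auto
  have "f (fa_mul (fa_gen x) (apply_right psi ts)) =
      f (apply_right psi (map (\<lambda>(m, v). (fa_mul (fa_gen x) m, v)) ts))"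
    by (simp add: fa_mul_apply_right)
  also have "\<dots> = psi (apply_left sv f (map (\<lambda>(m, v). (fa_mul (fa_gen x) m, v)) ts))"
    by (rule linear_functional_apply_left_eq[OF psi f fin', symmetric])
  finally show ?thesis
    by (simp add: apply_left_lmul)
qed

lemma apply_right_singular_part:
  assumes kernel: "functional_kernel = J" and psi: "linear_functional sv psi"
    and comp: "\<And>m v. (m, v) \<in> set ts \<Longrightarrow> m \<in> verma_part (int n)"
    and raise: "\<And>i x f. 0 < i \<Longrightarrow> i \<le> int n \<Longrightarrow> x \<in> G i \<Longrightarrow> x \<noteq> 0 \<Longrightarrow> verma_functional f \<Longrightarrow>
      apply_left sv (\<lambda>a. f (fa_mul (fa_gen x) a)) ts = 0"
  shows "apply_right psi ts \<in> singular_part n"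
proof -
  define m where "m = apply_right psi ts"
  have m: "m \<in> verma_part (int n)"
    unfolding m_def using comp by (rule apply_right_verma_part)
  have "fa_mul (fa_gen x) m \<in> J" if i: "0 < i" and x: "x \<in> G i" for i x
  proof (cases "x = 0 \<or> int n < i")
    case True
    then show ?thesis
    proof
      assume "x = 0"
      moreover have "fa_fin m"
        using m by (simp add: verma_part_def)
      ultimately show ?thesis
        using vi_ug[OF ug_rmul[OF ug_ideal_gen_zero]] by simp
    next
      assume "int n < i"
      then show ?thesis
        using gen_mul_verma_part[OF x m] verma_part_negative by simp
    qed
  next
    case False
    have "f (fa_mul (fa_gen x) m) = 0" if f: "verma_functional f" for f
      using gen_mul_apply_right_eq[OF psi f, of ts x] comp raise[OF i _ x _ f] False
        linear_functional_zero[OF psi]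
      by (simp add: m_def verma_part_def)
    moreover have "fa_fin (fa_mul (fa_gen x) m)"
      using m by (simp add: verma_part_def)
    ultimately show ?thesis
      using kernel by (auto simp: functional_kernel_def)
  qed
  then show ?thesis
    using m unfolding singular_part_def m_def by blast
qed

text \<open>Each contraction \<open>(1 \<otimes> \<psi>) ts\<close> is a singular vector of negative degree, hence zero, and
  the contractions determine \<open>ts\<close>. If every functional on \<open>M\<^sup>+\<^sub>\<lambda>\<close> vanishes there is nothing to prove.\<close>

lemma singular_tensor_zero:
  assumes irreducible: "verma_irreducible sg br G chi lam" and sv: "vector_space sv" and "0 < n"
    and comp: "\<And>m v. (m, v) \<in> set ts \<Longrightarrow> m \<in> verma_part (int n)"
    and raise: "\<And>i x f. 0 < i \<Longrightarrow> i \<le> int n \<Longrightarrow> x \<in> G i \<Longrightarrow> x \<noteq> 0 \<Longrightarrow> verma_functional f \<Longrightarrow>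
      apply_left sv (\<lambda>a. f (fa_mul (fa_gen x) a)) ts = 0"
  shows "tensor_zero sg br G chi lam sv ts"
  unfolding tensor_zero_iff
proof (intro allI impI)
  fix f assume f: "verma_functional f"
  have fin: "\<And>m v. (m, v) \<in> set ts \<Longrightarrow> fa_fin m"
    using comp by (auto simp: verma_part_def)
  consider "functional_kernel = {a. fa_fin a}" | "functional_kernel = J"
    using functional_kernel_cases[OF irreducible] by blast
  then show "apply_left sv f ts = 0"
  proof cases
    case 1
    then show ?thesis
      using f fin by (intro apply_left_vanishing[OF sv]) (auto simp: functional_kernel_def)
  next
    case 2
    show ?thesis
    proof (rule linear_functionals_separate[OF sv])
      fix psi assume psi: "linear_functional sv psi"
      have "apply_right psi ts \<in> J"
        using apply_right_singular_part[OF 2 psi comp raise]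
        by (rule singular_vector_in_verma_ideal[OF irreducible \<open>0 < n\<close>])
      then show "psi (apply_left sv f ts) = 0"
        using linear_functional_apply_left_eq[OF psi f fin] verma_functional_verma_ideal[OF f] by simp
    qed
  qed
qed

lemma apply_left_ctensor_act:
  assumes act: "lie_module sg br sv act" and x: "x \<in> G i" "x \<noteq> 0" and n: "int k + i = int n"
  shows "apply_left sv f (ctensor_act G act x z k) =
    apply_left sv (\<lambda>a. f (fa_mul (fa_gen x) a)) (z n) + act x (apply_left sv f (z k))"
proof -
  have "{j. gpr G j x \<noteq> 0 \<and> 0 \<le> int k + j} = {i}"
    using gpr_homogeneous[OF x(1)] x(2) n by auto
  then have "ctensor_act G act x z k = map (\<lambda>(m, v). (fa_mul (fa_gen x) m, v)) (z n)
      @ map (\<lambda>(m, v). (m, act x v)) (z k)"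
    using gpr_homogeneous[OF x(1)] n by (simp add: ctensor_act_def)
  then show ?thesis
    by (simp add: apply_left_append apply_left_lmul apply_left_act[OF act])
qed

text \<open>The degree \<open>-k\<close> component of \<open>x \<cdot> z\<close>, for \<open>x\<close> of degree \<open>i = n - k > 0\<close>, is
  \<open>x \<cdot> z\<^sub>-\<^sub>n + (1 \<otimes> x) z\<^sub>-\<^sub>k\<close>.\<close>

lemma ctensor_invariant_raise:
  assumes act: "lie_module sg br sv act"
    and z: "ctensor_invariant sg br G chi lam sv act z" and z': "ctensor_invariant sg br G chi lam sv act z'"
    and x: "x \<in> G i" "x \<noteq> 0" and n: "int k + i = int n" and f: "verma_functional f"
    and agree: "tensor_zero sg br G chi lam sv (ctensor_diff z z' k)"
  shows "apply_left sv (\<lambda>a. f (fa_mul (fa_gen x) a)) (ctensor_diff z z' n) = 0"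
proof -
  have sv: "vector_space sv"
    using act by (simp add: lie_module_def)
  have "apply_left sv (\<lambda>a. f (fa_mul (fa_gen x) a)) (y n) = - act x (apply_left sv f (y k))"
    if "ctensor_invariant sg br G chi lam sv act y" for y
  proof -
    have "apply_left sv f (ctensor_act G act x y k) = 0"
      using that f by (simp add: ctensor_invariant_def tensor_zero_iff)
    then show ?thesis
      by (simp add: apply_left_ctensor_act[OF act x n] eq_neg_iff_add_eq_0)
  qed
  then show ?thesis
    using z z' agree f by (simp add: apply_left_ctensor_diff[OF sv] tensor_zero_iff)
qed

lemma ctensor_diff_leading_component:
  assumes "vector_space sv"
    and "ctensor_leading sg br G chi lam sv w z" "ctensor_leading sg br G chi lam sv w z'"
  shows "tensor_zero sg br G chi lam sv (ctensor_diff z z' 0)"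
proof -
  interpret vector_space sv
    by (rule assms(1))
  have "apply_left sv f (y 0) = sv (f fa_one) w"
    if "ctensor_leading sg br G chi lam sv w y" "verma_functional f" for y f
    using that by (simp add: ctensor_leading_def tensor_zero_iff apply_left_append apply_left_def)
  then show ?thesis
    using assms(2,3) by (simp add: tensor_zero_iff apply_left_ctensor_diff[OF assms(1)])
qed

lemma ctensor_diff_component:
  assumes irreducible: "verma_irreducible sg br G chi lam" and act: "lie_module sg br sv act"
    and "ctensor_wf sg br G chi lam z" "ctensor_invariant sg br G chi lam sv act z"
    and "ctensor_wf sg br G chi lam z'" "ctensor_invariant sg br G chi lam sv act z'"
    and "0 < n" and below: "\<And>k. k < n \<Longrightarrow> tensor_zero sg br G chi lam sv (ctensor_diff z z' k)"
  shows "tensor_zero sg br G chi lam sv (ctensor_diff z z' n)"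
proof (rule singular_tensor_zero[OF irreducible _ \<open>0 < n\<close>])
  show "vector_space sv"
    using act by (simp add: lie_module_def)
  show "(m, v) \<in> set (ctensor_diff z z' n) \<Longrightarrow> m \<in> verma_part (int n)" for m v
    using assms(3,5) by (auto simp: ctensor_diff_def ctensor_wf_def verma_part_nat)
  show "apply_left sv (\<lambda>a. f (fa_mul (fa_gen x) a)) (ctensor_diff z z' n) = 0"
    if "0 < i" "i \<le> int n" "x \<in> G i" "x \<noteq> 0" "verma_functional f" for i x f
    using that below[of "nat (int n - i)"]
    by (intro ctensor_invariant_raise[OF act assms(4,6), of x i "nat (int n - i)"]) simp_all
qed

end

lemma nonsingular_character_zero:
  assumes "graded_lie_algebra sg br G" "nonsingular_character sg br G chi"
  shows "chi 0 = 0"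
proof -
  have "0 \<in> G 0"
    using graded_lie.G_zero[OF graded_lie.intro[OF assms(1)]] .
  then have "chi (0 + 0) = chi 0 + chi 0"
    using assms(2) unfolding nonsingular_character_def by blast
  then show ?thesis
    by simp
qed

theorem proposition4p1:
  fixes sg :: "complex \<Rightarrow> 'g \<Rightarrow> 'g::ab_group_add"
    and br :: "'g \<Rightarrow> 'g \<Rightarrow> 'g"
    and G :: "int \<Rightarrow> 'g set"
    and chi :: "'g \<Rightarrow> complex"
    and lam :: complex
    and sv :: "complex \<Rightarrow> 'v \<Rightarrow> 'v::ab_group_add"
    and act :: "'g \<Rightarrow> 'v \<Rightarrow> 'v"
    and w :: 'v
    and z z' :: "('g, 'v) ctensor"
  assumes "graded_lie_algebra sg br G"
    and "nonsingular_character sg br G chi"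
    and "verma_irreducible sg br G chi lam"
    and "lie_module sg br sv act"
    and "ctensor_wf sg br G chi lam z"
    and "ctensor_invariant sg br G chi lam sv act z"
    and "ctensor_leading sg br G chi lam sv w z"
    and "ctensor_wf sg br G chi lam z'"
    and "ctensor_invariant sg br G chi lam sv act z'"
    and "ctensor_leading sg br G chi lam sv w z'"
  shows "ctensor_eq sg br G chi lam sv z z'"
proof -
  interpret verma_module sg br G chi lam
    by unfold_locales (use assms(1,2) nonsingular_character_zero in auto)
  have "vector_space sv"
    using assms(4) by (simp add: lie_module_def)
  have "tensor_zero sg br G chi lam sv (ctensor_diff z z' n)" for n
  proof (induction n rule: less_induct)
    case (less n)
    then show ?case
      using ctensor_diff_leading_component[OF \<open>vector_space sv\<close> assms(7,10)]
        ctensor_diff_component[OF assms(3,4,5,6,8,9)]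
      by (cases "n = 0") simp_all
  qed
  then show ?thesis
    unfolding ctensor_eq_def ctensor_diff_def by blast
qed

end
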